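(* Let $f:\mathbb{R}^d\to\mathbb{R}$ be $C^3$ with a critical point $\mathbf{x}^*$, $1\le k\le d-1$, and suppose there exist $\delta>0$, $L>\mu>0$, $M>0$ such that for every $\mathbf{x}$ with $\|\mathbf{x}-\mathbf{x}^*\|_2\le\delta$ the eigenvalues of $\nabla^2 f(\mathbf{x})$ satisfy $-L<\lambda_1\le\dots\le\lambda_k<-\mu<0<\mu<\lambda_{k+1}\le\dots\le\lambda_d<L$ and $\nabla^2 f$ is $M$-Lipschitz on this ball. Fix such an $\mathbf{x}$, let $\mathbf{H}=\nabla^2 f(\mathbf{x})$, and suppose the stochastic matrices satisfy $\mathbb{E}\,\mathbf{H}(\omega)=\mathbf{H}$, $\mathbb{E}\|\mathbf{H}(\omega)\|_2^2\le\sigma^2$, $\|\mathbf{H}(\omega)\|_2\le G_1$. Then Algorithm 1 almost surely stops after finitely many steps, and its outputs $\tilde{\mathbf{v}}_1,\dots,\tilde{\mathbf{v}}_k$ approximate the exact unstable eigenvectors with an error bounded in terms of $\epsilon_{\mathbf{v}}$: precisely, let $\Delta=\min_{\lambda_i<\lambda_j<0}(\lambda_j-\lambda_i)$ be the minimal gap between distinct negative eigenvalues of $\mathbf{H}$ and $Q=\max\big(1,\frac{1}{\min(\Delta^2/4,\mu^2)},\frac{1}{L^2}\big)$; if $\epsilon_{\mathbf{v}}$ is so small that $\bar z_k:=\sqrt{L^{2k}Q^k(k!)^2\epsilon_{\mathbf{v}}/d}<\min(\Delta/2,\mu)$, so that $\min((\Delta-\bar z_k)^2,(2\mu-\bar z_k)^2)>1/Q$,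 then $$\Big\|\sum_{i=1}^k\tilde{\mathbf{v}}_i\tilde{\mathbf{v}}_i^\top-\sum_{i=1}^k\mathbf{v}_i\mathbf{v}_i^\top\Big\|_2^2\le k\,\bar z_k^2\,d,$$ where $\mathbf{v}_1,\dots,\mathbf{v}_k$ are orthonormal eigenvectors of $\mathbf{H}$ for its $k$ smallest eigenvalues.
   Context: Algorithm 1 (stochastic eigenvector search), with step sizes $\alpha(n)>0$ satisfying $\sum\alpha(n)=\infty$, $\sum\alpha(n)^2<\infty$, fresh independent samples $\omega(n)$ at each step, tolerance $\epsilon_{\mathbf{v}}>0$ and initial unit vectors $\mathbf{v}_1,\dots,\mathbf{v}_k$: first, with counter $n$ starting at $0$, while $\|(I-\mathbf{v}_1\mathbf{v}_1^\top)\mathbf{H}\mathbf{v}_1\|_2^2\ge L^2\epsilon_{\mathbf{v}}$, set $\mathbf{v}_1\leftarrow\mathbf{v}_1-\alpha(n)(I-\mathbf{v}_1\mathbf{v}_1^\top)\mathbf{H}(\omega(n))\mathbf{v}_1$, normalize, $n\leftarrow n+1$. Then for $j=2,\dots,k$: reset $n=0$, replace $\mathbf{v}_j$ by its normalized projection onto the orthogonal complement of $\mathrm{span}\{\mathbf{v}_1,\dots,\mathbf{v}_{j-1}\}$, and while $\|P_j\mathbf{H}\mathbf{v}_j\|_2^2\ge L^2\epsilon_{\mathbf{v}}$, where $P_j=I-\mathbf{v}_j\mathbf{v}_j^\top-\sum_{i<j}\mathbf{v}_i\mathbf{v}_i^\top$, set $\mathbf{v}_j\leftarrow\mathbf{v}_j-\alpha(n)P_j\mathbf{H}(\omega(n))\mathbf{v}_j$,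 normalize, $n\leftarrow n+1$. The outputs are the final $\tilde{\mathbf{v}}_1,\dots,\tilde{\mathbf{v}}_k$. Standing assumption of the paper: the vectors returned approximate eigenvectors associated with the $k$ smallest eigenvalues of $\mathbf{H}$ (not stable eigendirections). *)

theory Defs
  imports "HOL-Probability.Probability"
begin

definition opnorm :: "real^'n^'n \<Rightarrow> real" where
  "opnorm A = onorm (\<lambda>x. A *v x)"

definition outer :: "real^'n \<Rightarrow> real^'n \<Rightarrow> real^'n^'n" where
  "outer a b = (\<chi> i j. a$i * b$j)"

definition unitize :: "real^'n \<Rightarrow> real^'n" where
  "unitize v = (1 / norm v) *\<^sub>R v"

definition sorted_eigs :: "real^'n^'n \<Rightarrow> (nat \<Rightarrow> real) \<Rightarrow> (nat \<Rightarrow> real^'n) \<Rightarrow> bool" where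
  "sorted_eigs A lam u \<longleftrightarrow>
     (\<forall>i\<in>{1..CARD('n)}. \<forall>j\<in>{1..CARD('n)}. u i \<bullet> u j = (if i = j then 1 else 0)) \<and>
     (\<forall>i\<in>{1..CARD('n)}. A *v u i = lam i *\<^sub>R u i) \<and>
     (\<forall>i j. 1 \<le> i \<longrightarrow> i \<le> j \<longrightarrow> j \<le> CARD('n) \<longrightarrow> lam i \<le> lam j)"

definition neg_gaps :: "(nat \<Rightarrow> real) \<Rightarrow> nat \<Rightarrow> real set" where
  "neg_gaps lam d = {lam j - lam i | i j. i \<in> {1..d} \<and> j \<in> {1..d} \<and> lam i < lam j \<and> lam j < 0}"

text \<open>The constant Q = max(1, 1/min(Delta^2/4, mu^2), 1/L^2); if there are no two distinct
  negative eigenvalues, Delta = +infinity and min(Delta^2/4, mu^2) = mu^2.\<close>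
definition Qconst :: "real set \<Rightarrow> real \<Rightarrow> real \<Rightarrow> real" where
  "Qconst G \<mu> L = max 1 (max (1 / (if G = {} then \<mu>\<^sup>2 else min ((Min G)\<^sup>2 / 4) (\<mu>\<^sup>2))) (1 / L\<^sup>2))"

text \<open>min(Delta/2, mu), same convention.\<close>
definition gap_bound :: "real set \<Rightarrow> real \<Rightarrow> real" where
  "gap_bound G \<mu> = (if G = {} then \<mu> else min (Min G / 2) \<mu>)"

definition Pmat :: "(real^'n) list \<Rightarrow> real^'n \<Rightarrow> real^'n^'n" where
  "Pmat prev v = mat 1 - outer v v - sum_list (map (\<lambda>p. outer p p) prev)"

definition proj_perp :: "(real^'n) list \<Rightarrow> real^'n \<Rightarrow> real^'n" where
  "proj_perp prev u = u - sum_list (map (\<lambda>p. (p \<bullet> u) *\<^sub>R p) prev)"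

text \<open>Iterates of one phase (inner while loop, ignoring the test), sample stream s.\<close>
fun phase_iter :: "(nat \<Rightarrow> real) \<Rightarrow> ('w \<Rightarrow> real^'n^'n) \<Rightarrow> (real^'n) list \<Rightarrow> real^'n
                    \<Rightarrow> (nat \<Rightarrow> 'w) \<Rightarrow> nat \<Rightarrow> real^'n" where
  "phase_iter \<alpha> Hs prev v0 s 0 = v0"
| "phase_iter \<alpha> Hs prev v0 s (Suc n) =
     (let v = phase_iter \<alpha> Hs prev v0 s n
      in unitize (v - \<alpha> n *\<^sub>R (Pmat prev v *v (Hs (s n) *v v))))"

definition loop_cond :: "real^'n^'n \<Rightarrow> real \<Rightarrow> real \<Rightarrow> (real^'n) list \<Rightarrow> real^'n \<Rightarrow> bool" where
  "loop_cond H L \<epsilon> prev v \<longleftrightarrow> (norm (Pmat prev v *v (H *v v)))\<^sup>2 \<ge> L\<^sup>2 * \<epsilon>"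

definition phase :: "(nat \<Rightarrow> real) \<Rightarrow> ('w \<Rightarrow> real^'n^'n) \<Rightarrow> real^'n^'n \<Rightarrow> real \<Rightarrow> real
                     \<Rightarrow> (real^'n) list \<Rightarrow> real^'n \<Rightarrow> (nat \<Rightarrow> 'w) \<Rightarrow> ((real^'n) \<times> nat) option" where
  "phase \<alpha> Hs H L \<epsilon> prev v0 s =
     (if \<exists>n. \<not> loop_cond H L \<epsilon> prev (phase_iter \<alpha> Hs prev v0 s n)
      then (let N = (LEAST n. \<not> loop_cond H L \<epsilon> prev (phase_iter \<alpha> Hs prev v0 s n))
            in Some (phase_iter \<alpha> Hs prev v0 s N, N))
      else None)"

text \<open>Phases j = |prev|+1, ...; t = number of samples consumed so far; ws = i.i.d. sample stream.\<close>
fun run :: "(nat \<Rightarrow> real) \<Rightarrow> ('w \<Rightarrow> real^'n^'n) \<Rightarrow> real^'n^'n \<Rightarrow> real \<Rightarrow> real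
            \<Rightarrow> (real^'n) list \<Rightarrow> nat \<Rightarrow> (real^'n) list \<Rightarrow> (nat \<Rightarrow> 'w) \<Rightarrow> (real^'n) list option" where
  "run \<alpha> Hs H L \<epsilon> prev t [] ws = Some prev"
| "run \<alpha> Hs H L \<epsilon> prev t (u # us) ws =
     (let v0 = (if prev = [] then u else unitize (proj_perp prev u))
      in case phase \<alpha> Hs H L \<epsilon> prev v0 (\<lambda>n. ws (t + n)) of
           None \<Rightarrow> None
         | Some (v, N) \<Rightarrow> run \<alpha> Hs H L \<epsilon> (prev @ [v]) (t + N) us ws)"

definition algorithm1 :: "(nat \<Rightarrow> real) \<Rightarrow> ('w \<Rightarrow> real^'n^'n) \<Rightarrow> real^'n^'n \<Rightarrow> real \<Rightarrow> real
            \<Rightarrow> (real^'n) list \<Rightarrow> (nat \<Rightarrow> 'w) \<Rightarrow> (real^'n) list option" where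
  "algorithm1 \<alpha> Hs H L \<epsilon> vinit ws = run \<alpha> Hs H L \<epsilon> [] 0 vinit ws"

end

theory Submission
  imports Defs
begin

text \<open>
  Termination: inside a phase, a step \<open>v \<mapsto> unitize (v - a P H(\<omega>) v)\<close> lowers the Rayleigh
  quotient \<open>v \<bullet> H v\<close> in conditional expectation by \<open>2 a norm (P H v)\<^sup>2\<close>, up to
  \<open>3 norm H G1\<^sup>2 a\<^sup>2\<close>, and \<open>norm (P H v)\<^sup>2 \<ge> L\<^sup>2 \<epsilon>\<close> while the loop runs. The Rayleigh quotient
  plus the remaining sum of squared step sizes therefore pays \<open>2 L\<^sup>2 \<epsilon> a n\<close> for every step
  taken, so the expected sum of the step sizes used before the loop exits is finite; since
  \<open>\<Sum>n. a n = \<infinity>\<close>, every phase stops almost surely.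

  Error bound: an output satisfies \<open>H v\<^sub>j = \<rho>\<^sub>j v\<^sub>j + (\<Sum>i<j. (v\<^sub>i \<bullet> H v\<^sub>j) v\<^sub>i) + r\<^sub>j\<close> with
  \<open>norm r\<^sub>j \<le> L \<surd>\<epsilon>\<close> and, by the standing assumption, \<open>\<rho>\<^sub>j < 0\<close>; the couplings are bounded by the
  earlier residuals. As \<open>H - \<rho>\<^sub>j\<close> exceeds \<open>\<mu>\<close> on the eigenvectors beyond the \<open>k\<close>-th, the
  component of \<open>v\<^sub>j\<close> there has norm at most \<open>(j + 1) L \<surd>\<epsilon> / \<mu>\<close>. The squared distance of the
  two rank-\<open>k\<close> projectors is at most the sum of the squares of these components, hence at most
  \<open>k\<^sup>3 L\<^sup>2 \<epsilon> / \<mu>\<^sup>2 \<le> k zbar\<^sup>2 d\<close>.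
\<close>

section \<open>Deflated projections\<close>

lemma outer_mult_vec: "outer a b *v z = (b \<bullet> z) *\<^sub>R a"
  by (simp add: outer_def matrix_vector_mult_def vec_eq_iff inner_vec_def sum_distrib_left
      mult.commute mult.left_commute)

lemma sum_list_mult_vec: "sum_list (map f xs) *v z = sum_list (map (\<lambda>p. f p *v z) xs)"
  by (induction xs) (auto simp: matrix_vector_mult_add_rdistrib)

lemma Pmat_mult_vec: "Pmat prev v *v z = proj_perp prev z - (v \<bullet> z) *\<^sub>R v"
  unfolding Pmat_def proj_perp_def
  by (simp add: matrix_vector_mult_diff_rdistrib sum_list_mult_vec outer_mult_vec o_def algebra_simps)

lemma Pmat_take_mult_vec:
  assumes "j \<le> length vs"
  shows "Pmat (take j vs) v *v z = z - (\<Sum>i<j. (vs ! i \<bullet> z) *\<^sub>R vs ! i) - (v \<bullet> z) *\<^sub>R v"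
  using assms
  by (auto simp: Pmat_mult_vec proj_perp_def sum_list_sum_nth atLeast0LessThan min_absorb1 intro!: sum.cong)

text \<open>Zero vectors are admitted because \<open>unitize 0 = 0\<close>: the start vector of a phase is \<open>0\<close>
  when the initial vector lies in the span of the earlier outputs.\<close>

definition orth_list :: "(real^'n) list \<Rightarrow> bool" where
  "orth_list ps \<longleftrightarrow> (\<forall>i<length ps. \<forall>j<length ps. i \<noteq> j \<longrightarrow> ps ! i \<bullet> ps ! j = 0)
                   \<and> (\<forall>p\<in>set ps. p = 0 \<or> norm p = 1)"

definition perp_unit :: "(real^'n) list \<Rightarrow> real^'n \<Rightarrow> bool" where
  "perp_unit ps v \<longleftrightarrow> v = 0 \<or> (norm v = 1 \<and> (\<forall>p\<in>set ps. p \<bullet> v = 0))"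

lemma orth_list_Nil [simp]: "orth_list []"
  by (simp add: orth_list_def)

lemma orth_list_snoc: "orth_list ps \<Longrightarrow> perp_unit ps v \<Longrightarrow> orth_list (ps @ [v])"
  unfolding orth_list_def perp_unit_def by (auto simp: nth_append inner_commute)

lemma perp_unit_cases: "perp_unit ps v \<Longrightarrow> v = 0 \<or> norm v = 1"
  by (auto simp: perp_unit_def)

lemma inner_sum_list_right: "z \<bullet> sum_list (map f xs) = sum_list (map (\<lambda>p. z \<bullet> f p) xs)"
  by (induction xs) (auto simp: inner_add_right)

lemma inner_proj_perp_member:
  assumes "orth_list ps" "p \<in> set ps"
  shows "p \<bullet> proj_perp ps z = 0"
proof -
  obtain i where i: "i < length ps" "p = ps ! i"
    using assms(2) by (auto simp: in_set_conv_nth)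
  have "ps ! i \<bullet> sum_list (map (\<lambda>q. (q \<bullet> z) *\<^sub>R q) ps)
          = (\<Sum>j<length ps. (ps ! j \<bullet> z) * (ps ! i \<bullet> ps ! j))"
    by (simp add: inner_sum_list_right sum_list_sum_nth atLeast0LessThan inner_sum_right)
  also have "\<dots> = (ps ! i \<bullet> z) * (ps ! i \<bullet> ps ! i)"
    using assms(1) i(1) by (subst sum.remove[of _ i]) (auto simp: orth_list_def intro!: sum.neutral)
  finally have "p \<bullet> proj_perp ps z = p \<bullet> z - (p \<bullet> z) * (p \<bullet> p)"
    using i(2) by (simp add: proj_perp_def inner_diff_right)
  moreover have "p = 0 \<or> norm p = 1"
    using assms by (auto simp: orth_list_def)
  ultimately show ?thesis
    by (auto simp: norm_eq_1)
qed

lemma proj_perp_orthogonal: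
  assumes "\<forall>p\<in>set ps. p \<bullet> w = 0"
  shows "proj_perp ps w = w" "w \<bullet> proj_perp ps z = w \<bullet> z"
proof -
  show "proj_perp ps w = w"
    using assms by (induction ps) (auto simp: proj_perp_def)
  have "w \<bullet> sum_list (map (\<lambda>q. (q \<bullet> z) *\<^sub>R q) ps) = 0"
    using assms by (induction ps) (auto simp: inner_add_right inner_commute)
  then show "w \<bullet> proj_perp ps z = w \<bullet> z"
    by (simp add: proj_perp_def inner_diff_right)
qed

lemma proj_perp_self_adjoint: "proj_perp ps a \<bullet> b = a \<bullet> proj_perp ps b"
proof -
  have "sum_list (map (\<lambda>q. (q \<bullet> a) *\<^sub>R q) ps) \<bullet> b = a \<bullet> sum_list (map (\<lambda>q. (q \<bullet> b) *\<^sub>R q) ps)"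
    by (induction ps) (auto simp: inner_add_left inner_add_right inner_commute)
  then show ?thesis
    by (simp add: proj_perp_def inner_diff_left inner_diff_right)
qed

lemma Pmat_self_adjoint: "(Pmat ps v *v a) \<bullet> b = a \<bullet> (Pmat ps v *v b)"
  using proj_perp_self_adjoint[of ps a b] proj_perp_self_adjoint[of ps b a]
  by (simp add: Pmat_mult_vec inner_diff_left inner_diff_right inner_commute)

context
  fixes ps :: "(real^'n) list" and v :: "real^'n"
  assumes ps: "orth_list ps" and v_unit: "norm v = 1" and v_perp: "\<forall>p\<in>set ps. p \<bullet> v = 0"
begin

lemma Pmat_mult_vec_orthogonal:
  shows "v \<bullet> (Pmat ps v *v z) = 0" "p \<in> set ps \<Longrightarrow> p \<bullet> (Pmat ps v *v z) = 0"
  using proj_perp_orthogonal(2)[OF v_perp] inner_proj_perp_member[OF ps] v_unit v_perp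
  by (simp_all add: Pmat_mult_vec inner_diff_right norm_eq_1)

lemma Pmat_idempotent: "Pmat ps v *v (Pmat ps v *v z) = Pmat ps v *v z"
  using Pmat_mult_vec_orthogonal proj_perp_orthogonal(1)[of ps "Pmat ps v *v z"]
  by (simp add: Pmat_mult_vec[of ps v "Pmat ps v *v z"])

lemma Pmat_inner_self: "(Pmat ps v *v z) \<bullet> (Pmat ps v *v z) = (Pmat ps v *v z) \<bullet> z"
  using Pmat_self_adjoint[of ps v "Pmat ps v *v z" z] Pmat_idempotent by simp

lemma norm_Pmat_mult_vec_le: "norm (Pmat ps v *v z) \<le> norm z"
proof -
  let ?w = "Pmat ps v *v z"
  have "norm ?w * norm ?w = ?w \<bullet> z"
    using Pmat_inner_self by (simp add: power2_norm_eq_inner flip: power2_eq_square)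
  also have "\<dots> \<le> norm ?w * norm z"
    by (rule order_trans[OF abs_ge_self Cauchy_Schwarz_ineq2])
  finally show ?thesis
    by (cases "?w = 0") auto
qed

end

lemma unitize_0 [simp]: "unitize 0 = 0"
  by (simp add: unitize_def)

lemma norm_unitize: "y \<noteq> 0 \<Longrightarrow> norm (unitize y) = 1"
  by (simp add: unitize_def)

lemma inner_unitize: "p \<bullet> unitize y = (p \<bullet> y) / norm y"
  by (simp add: unitize_def)

lemma perp_unit_step:
  assumes ps: "orth_list ps" and v: "perp_unit ps v"
  shows "perp_unit ps (unitize (v - a *\<^sub>R (Pmat ps v *v (A *v v))))"
proof (cases "v = 0")
  case True
  then show ?thesis by (simp add: perp_unit_def Pmat_mult_vec proj_perp_def)
next
  case False
  then have v_unit: "norm v = 1" and v_perp: "\<forall>p\<in>set ps. p \<bullet> v = 0"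
    using v by (auto simp: perp_unit_def)
  note orth = Pmat_mult_vec_orthogonal[OF ps v_unit v_perp]
  have "v \<bullet> (v - a *\<^sub>R (Pmat ps v *v (A *v v))) = 1"
    using orth v_unit by (simp add: inner_diff_right norm_eq_1)
  then have "v - a *\<^sub>R (Pmat ps v *v (A *v v)) \<noteq> 0"
    by auto
  then show ?thesis
    using orth v_perp by (auto simp: perp_unit_def norm_unitize inner_unitize inner_diff_right)
qed

lemma perp_unit_phase_iter:
  "orth_list ps \<Longrightarrow> perp_unit ps v \<Longrightarrow> perp_unit ps (phase_iter \<alpha> Hs ps v ws n)"
  by (induction n) (auto simp: Let_def perp_unit_step)

section \<open>The phases of the algorithm\<close>

definition phase_start :: "(real^'n) list \<Rightarrow> real^'n \<Rightarrow> real^'n" where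
  "phase_start ps u = (if ps = [] then u else unitize (proj_perp ps u))"

lemma perp_unit_phase_start: "orth_list ps \<Longrightarrow> norm u = 1 \<Longrightarrow> perp_unit ps (phase_start ps u)"
  using norm_unitize[of "proj_perp ps u"] inner_proj_perp_member[of ps]
  by (cases "proj_perp ps u = 0") (auto simp: phase_start_def perp_unit_def inner_unitize)

lemma run_Cons:
  "run \<alpha> Hs H L \<epsilon> ps t (u # us) ws =
     (case phase \<alpha> Hs H L \<epsilon> ps (phase_start ps u) (\<lambda>n. ws (t + n)) of
        None \<Rightarrow> None
      | Some (v, N) \<Rightarrow> run \<alpha> Hs H L \<epsilon> (ps @ [v]) (t + N) us ws)"
  by (simp add: phase_start_def Let_def)

declare run.simps(2) [simp del]

lemma phase_iter_Suc_shift: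
  "phase_iter \<alpha> Hs ps v ws (Suc n) =
   phase_iter (\<lambda>i. \<alpha> (Suc i)) Hs ps (unitize (v - \<alpha> 0 *\<^sub>R (Pmat ps v *v (Hs (ws 0) *v v))))
     (\<lambda>i. ws (Suc i)) n"
  by (induction n) (simp_all add: Let_def)

lemma run_offset: "run \<alpha> Hs H L \<epsilon> ps t us ws = run \<alpha> Hs H L \<epsilon> ps 0 us (\<lambda>n. ws (t + n))"
proof (induction us arbitrary: ps t ws)
  case Nil
  then show ?case by simp
next
  case (Cons u us)
  have "run \<alpha> Hs H L \<epsilon> ps' (t + N) us ws = run \<alpha> Hs H L \<epsilon> ps' N us (\<lambda>n. ws (t + n))" for ps' N
    using Cons.IH[of ps' "t + N" ws] Cons.IH[of ps' N "\<lambda>n. ws (t + n)"] by (simp add: add.assoc)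
  then show ?case
    by (simp add: run_Cons split: option.split)
qed

lemma phase_Some_iff:
  "phase \<alpha> Hs H L \<epsilon> ps v0 ws = Some (v, N) \<longleftrightarrow>
     (\<forall>i<N. loop_cond H L \<epsilon> ps (phase_iter \<alpha> Hs ps v0 ws i)) \<and>
     \<not> loop_cond H L \<epsilon> ps (phase_iter \<alpha> Hs ps v0 ws N) \<and> v = phase_iter \<alpha> Hs ps v0 ws N"
  (is "?lhs \<longleftrightarrow> ?rhs")
proof
  let ?stop = "\<lambda>n. \<not> loop_cond H L \<epsilon> ps (phase_iter \<alpha> Hs ps v0 ws n)"
  show ?rhs if ?lhs
  proof -
    have "\<exists>n. ?stop n" "N = (LEAST n. ?stop n)" "v = phase_iter \<alpha> Hs ps v0 ws N"
      using that by (auto simp: phase_def Let_def split: if_splits)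
    then show ?thesis
      using LeastI_ex[of ?stop] not_less_Least[of _ ?stop] by auto
  qed
  show ?lhs if ?rhs
  proof -
    have "(LEAST n. ?stop n) = N"
      using that by (intro Least_equality) (auto simp flip: not_less)
    then show ?thesis
      using that by (auto simp: phase_def Let_def)
  qed
qed

lemma phase_None_iff:
  "phase \<alpha> Hs H L \<epsilon> ps v0 ws = None \<longleftrightarrow> (\<forall>n. loop_cond H L \<epsilon> ps (phase_iter \<alpha> Hs ps v0 ws n))"
  by (simp add: phase_def Let_def)

lemma run_Cons_not_None_iff:
  "run \<alpha> Hs H L \<epsilon> ps 0 (u # us) ws \<noteq> None \<longleftrightarrow>
   (\<exists>n. (\<forall>i<n. loop_cond H L \<epsilon> ps (phase_iter \<alpha> Hs ps (phase_start ps u) ws i)) \<and>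
        \<not> loop_cond H L \<epsilon> ps (phase_iter \<alpha> Hs ps (phase_start ps u) ws n) \<and>
        run \<alpha> Hs H L \<epsilon> (ps @ [phase_iter \<alpha> Hs ps (phase_start ps u) ws n]) 0 us (\<lambda>i. ws (n + i)) \<noteq> None)"
  (is "_ \<longleftrightarrow> (\<exists>n. ?runs n \<and> ?exits n \<and> ?rest n)")
proof (cases "phase \<alpha> Hs H L \<epsilon> ps (phase_start ps u) ws")
  case None
  then show ?thesis
    using phase_None_iff by (fastforce simp: run_Cons)
next
  case (Some p)
  then obtain v N where vN: "phase \<alpha> Hs H L \<epsilon> ps (phase_start ps u) ws = Some (v, N)"
    by (cases p) auto
  then have "?runs N" "?exits N" and v: "v = phase_iter \<alpha> Hs ps (phase_start ps u) ws N"
    by (simp_all add: phase_Some_iff)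
  moreover have "n = N" if "?runs n" "?exits n" for n
    using that \<open>?runs N\<close> \<open>?exits N\<close> by (cases n N rule: linorder_cases) auto
  ultimately have "(\<exists>n. ?runs n \<and> ?exits n \<and> ?rest n) \<longleftrightarrow> ?rest N"
    by blast
  then show ?thesis
    using vN v by (simp add: run_Cons run_offset[of _ _ _ _ _ _ N])
qed

lemma run_Some_outputs:
  assumes "orth_list ps" "\<forall>u\<in>set us. norm u = 1" "run \<alpha> Hs H L \<epsilon> ps t us ws = Some vs"
  shows "length vs = length ps + length us \<and> take (length ps) vs = ps \<and> orth_list vs \<and>
         (\<forall>j. length ps \<le> j \<and> j < length vs \<longrightarrow> \<not> loop_cond H L \<epsilon> (take j vs) (vs ! j))"
  using assms
proof (induction us arbitrary: ps t)
  case Nil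
  then show ?case by auto
next
  case (Cons u us)
  obtain v N where
    ph: "phase \<alpha> Hs H L \<epsilon> ps (phase_start ps u) (\<lambda>n. ws (t + n)) = Some (v, N)" and
    rest: "run \<alpha> Hs H L \<epsilon> (ps @ [v]) (t + N) us ws = Some vs"
    using Cons.prems(3) by (auto simp: run_Cons split: option.splits)
  have v_stop: "\<not> loop_cond H L \<epsilon> ps v" and v: "v = phase_iter \<alpha> Hs ps (phase_start ps u) (\<lambda>n. ws (t + n)) N"
    using ph by (simp_all add: phase_Some_iff)
  have "perp_unit ps v"
    unfolding v using Cons.prems(1,2) by (simp add: perp_unit_phase_iter perp_unit_phase_start)
  with Cons.prems(1) have "orth_list (ps @ [v])"
    by (rule orth_list_snoc)
  then have IH: "length vs = length ps + Suc (length us) \<and> take (Suc (length ps)) vs = ps @ [v] \<and>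
      orth_list vs \<and> (\<forall>j. Suc (length ps) \<le> j \<and> j < length vs \<longrightarrow> \<not> loop_cond H L \<epsilon> (take j vs) (vs ! j))"
    using Cons.IH[OF _ _ rest] Cons.prems(2) by auto
  have "take (length ps) vs = take (length ps) (take (Suc (length ps)) vs)"
    by simp
  with IH have "take (length ps) vs = ps"
    by simp
  have "vs ! length ps = take (Suc (length ps)) vs ! length ps"
    by simp
  with IH have "vs ! length ps = v"
    by simp
  show ?case
  proof (intro conjI allI impI)
    fix j assume "length ps \<le> j \<and> j < length vs"
    then show "\<not> loop_cond H L \<epsilon> (take j vs) (vs ! j)"
      using IH v_stop \<open>take (length ps) vs = ps\<close> \<open>vs ! length ps = v\<close>
      by (cases "j = length ps") auto
  qed (use IH \<open>take (length ps) vs = ps\<close> in auto)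
qed

section \<open>Orthonormal systems\<close>

definition orthonormal_on :: "('i \<Rightarrow> 'a::real_inner) \<Rightarrow> 'i set \<Rightarrow> bool" where
  "orthonormal_on e J \<longleftrightarrow> (\<forall>i\<in>J. \<forall>j\<in>J. e i \<bullet> e j = (if i = j then 1 else 0))"

definition proj_on :: "('i \<Rightarrow> 'a::real_inner) \<Rightarrow> 'i set \<Rightarrow> 'a \<Rightarrow> 'a" where
  "proj_on e J x = (\<Sum>j\<in>J. (e j \<bullet> x) *\<^sub>R e j)"

lemma orthonormal_on_subset: "orthonormal_on e J \<Longrightarrow> I \<subseteq> J \<Longrightarrow> orthonormal_on e I"
  unfolding orthonormal_on_def by blast

lemma orthonormal_on_norm: "orthonormal_on e J \<Longrightarrow> j \<in> J \<Longrightarrow> norm (e j) = 1"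
  by (simp add: orthonormal_on_def norm_eq_1)

lemma orthonormal_on_inj_independent:
  assumes "orthonormal_on e J"
  shows "inj_on e J" "independent (e ` J)"
proof -
  show "inj_on e J"
  proof (rule inj_onI)
    fix i j assume ij: "i \<in> J" "j \<in> J" "e i = e j"
    then have "e i \<bullet> e j = 1"
      using assms by (simp add: orthonormal_on_def)
    then show "i = j"
      using assms ij(1,2) by (auto simp: orthonormal_on_def split: if_splits)
  qed
  have "pairwise orthogonal (e ` J)"
  proof (rule pairwiseI, clarify)
    fix i j assume "i \<in> J" "j \<in> J" "e i \<noteq> e j"
    then show "orthogonal (e i) (e j)"
      using assms by (auto simp: orthogonal_def orthonormal_on_def)
  qed
  moreover have "e j \<noteq> 0" if "j \<in> J" for j
  proof -
    have "e j \<bullet> e j = 1"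
      using assms that by (simp add: orthonormal_on_def)
    then show ?thesis
      by auto
  qed
  ultimately show "independent (e ` J)"
    by (intro pairwise_orthogonal_independent) auto
qed

lemma sum_outer_mult_vec: "(\<Sum>i\<in>I. outer (e i) (e i)) *v z = proj_on e I z"
  unfolding proj_on_def
  by (induction I rule: infinite_finite_induct) (auto simp: matrix_vector_mult_add_rdistrib outer_mult_vec)

lemma linear_proj_on: "linear (proj_on e J)"
  by (rule linearI) (simp_all add: proj_on_def inner_add_right scaleR_add_left sum.distrib scaleR_sum_right)

lemma proj_on_in_span: "finite J \<Longrightarrow> proj_on e J x \<in> span (e ` J)"
  unfolding proj_on_def by (intro span_sum span_scale span_base) auto

context
  fixes e :: "'i \<Rightarrow> 'a::real_inner" and J :: "'i set"
  assumes e: "orthonormal_on e J" and J: "finite J"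
begin

lemma inner_proj_on: "i \<in> J \<Longrightarrow> e i \<bullet> proj_on e J x = e i \<bullet> x"
proof -
  assume i: "i \<in> J"
  have "e i \<bullet> proj_on e J x = (\<Sum>j\<in>J. (e j \<bullet> x) * (e i \<bullet> e j))"
    by (simp add: proj_on_def inner_sum_right)
  also have "\<dots> = (\<Sum>j\<in>J. if j = i then e j \<bullet> x else 0)"
    using e i by (intro sum.cong) (auto simp: orthonormal_on_def)
  finally show ?thesis
    using J i by simp
qed

lemma norm_proj_on_sq: "norm (proj_on e J x)^2 = (\<Sum>j\<in>J. (e j \<bullet> x)^2)"
proof -
  have "norm (proj_on e J x)^2 = proj_on e J x \<bullet> proj_on e J x"
    by (simp add: power2_norm_eq_inner)
  also have "\<dots> = (\<Sum>j\<in>J. (e j \<bullet> x) * (e j \<bullet> proj_on e J x))"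
    by (subst (1) proj_on_def) (simp add: inner_sum_left)
  finally show ?thesis
    by (simp add: inner_proj_on power2_eq_square)
qed

lemma inner_proj_on_residual: "i \<in> J \<Longrightarrow> e i \<bullet> (x - proj_on e J x) = 0"
  by (simp add: inner_diff_right inner_proj_on)

lemma proj_on_orthogonal_residual: "proj_on e J y \<bullet> (x - proj_on e J x) = 0"
  by (simp add: proj_on_def[of e J y] inner_sum_left inner_diff_right inner_proj_on)

lemma norm_proj_on_Pythagorean: "norm x^2 = norm (proj_on e J x)^2 + norm (x - proj_on e J x)^2"
  using norm_add_Pythagorean[of "proj_on e J x" "x - proj_on e J x"] proj_on_orthogonal_residual
  by (simp add: orthogonal_def)

lemma norm_proj_on_le: "norm (proj_on e J x) \<le> norm x"
  using norm_proj_on_Pythagorean[of x] by (auto intro: power2_le_imp_le)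

end

lemma proj_on_eq_self:
  fixes e :: "'i \<Rightarrow> 'a::euclidean_space"
  assumes e: "orthonormal_on e J" and J: "finite J" and card: "card J = DIM('a)"
  shows "proj_on e J x = x"
proof -
  have "card (e ` J) = DIM('a)"
    using card orthonormal_on_inj_independent(1)[OF e] by (simp add: card_image)
  then have "UNIV \<subseteq> span (e ` J)"
    using orthonormal_on_inj_independent(2)[OF e] by (intro card_ge_dim_independent) auto
  moreover have "orthogonal (x - proj_on e J x) y" if "y \<in> span (e ` J)" for y
    using that by (rule orthogonal_to_span)
      (auto simp: orthogonal_def inner_proj_on_residual[OF e J] inner_commute)
  ultimately have "(x - proj_on e J x) \<bullet> x = 0" "(x - proj_on e J x) \<bullet> proj_on e J x = 0"
    using proj_on_in_span[OF J, of e x] by (auto simp: orthogonal_def)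
  then have "(x - proj_on e J x) \<bullet> (x - proj_on e J x) = 0"
    by (simp add: inner_diff_right)
  then show ?thesis
    by simp
qed

lemma parseval:
  fixes e :: "'i \<Rightarrow> 'a::euclidean_space"
  assumes "orthonormal_on e J" "finite J" "card J = DIM('a)"
  shows "norm x^2 = (\<Sum>j\<in>J. (e j \<bullet> x)^2)"
  using norm_proj_on_sq[OF assms(1,2), of x] proj_on_eq_self[OF assms] by simp

lemma exists_orthogonal_in_span:
  fixes B :: "'a::euclidean_space set"
  assumes B: "independent B" and e: "orthonormal_on e J" "finite J" and card: "card J < card B"
  shows "\<exists>z\<in>span B. z \<noteq> 0 \<and> (\<forall>j\<in>J. e j \<bullet> z = 0)"
proof -
  let ?P = "proj_on e J"
  have "?P ` span B \<subseteq> span (e ` J)"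
    using proj_on_in_span[OF e(2)] by auto
  then have "dim (?P ` span B) \<le> card (e ` J)"
    by (rule dim_le_card) (simp add: e(2))
  also have "\<dots> \<le> card J"
    by (rule card_image_le[OF e(2)])
  moreover have "dim (span B) = card B"
    using B by (rule dim_span_eq_card_independent)
  moreover have "dim (?P ` span B) = dim (span B)" if "inj_on ?P (span B)"
    using that by (intro dim_image_eq[OF linear_proj_on]) (simp add: span_span)
  ultimately have "\<not> inj_on ?P (span B)"
    using card by linarith
  then obtain a b where ab: "a \<in> span B" "b \<in> span B" "a \<noteq> b" "?P a = ?P b"
    unfolding inj_on_def by blast
  have "?P (a - b) = ?P a - ?P b"
    by (rule linear_diff[OF linear_proj_on])
  with ab(4) have "?P (a - b) = 0"
    by simp
  then have "(\<Sum>j\<in>J. (e j \<bullet> (a - b))^2) = 0"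
    using norm_proj_on_sq[OF e, of "a - b"] by simp
  then have "\<forall>j\<in>J. e j \<bullet> (a - b) = 0"
    using e(2) by (simp add: sum_nonneg_eq_0_iff)
  then show ?thesis
    using ab by (intro bexI[of _ "a - b"]) (auto intro: span_diff)
qed

section \<open>Sorted eigendecompositions\<close>

context
  fixes H :: "real^'n^'n" and lam :: "nat \<Rightarrow> real" and u :: "nat \<Rightarrow> real^'n"
  assumes eigs: "sorted_eigs H lam u"
begin

lemma sorted_eigs_orthonormal: "orthonormal_on u {1..CARD('n)}"
  using eigs by (simp add: sorted_eigs_def orthonormal_on_def)

lemma sorted_eigs_eigenvector: "i \<in> {1..CARD('n)} \<Longrightarrow> H *v u i = lam i *\<^sub>R u i"
  using eigs by (simp add: sorted_eigs_def)

lemma sorted_eigs_mono: "1 \<le> i \<Longrightarrow> i \<le> j \<Longrightarrow> j \<le> CARD('n) \<Longrightarrow> lam i \<le> lam j"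
  using eigs by (simp add: sorted_eigs_def)

lemma sorted_eigs_proj_eq_self: "proj_on u {1..CARD('n)} x = x"
  by (rule proj_on_eq_self[OF sorted_eigs_orthonormal]) simp_all

lemma sorted_eigs_parseval: "norm x^2 = (\<Sum>i\<in>{1..CARD('n)}. (u i \<bullet> x)^2)"
  by (rule parseval[OF sorted_eigs_orthonormal]) simp_all

lemma sorted_eigs_mult_vec: "H *v x = (\<Sum>i\<in>{1..CARD('n)}. (lam i * (u i \<bullet> x)) *\<^sub>R u i)"
proof -
  have "H *v x = H *v proj_on u {1..CARD('n)} x"
    by (simp only: sorted_eigs_proj_eq_self)
  also have "\<dots> = (\<Sum>i\<in>{1..CARD('n)}. (u i \<bullet> x) *\<^sub>R (H *v u i))"
    unfolding proj_on_def linear_sum[OF matrix_vector_mul_linear] by (simp add: matrix_vector_mult_scaleR)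
  finally show ?thesis
    by (simp add: sorted_eigs_eigenvector mult.commute)
qed

lemma sorted_eigs_self_adjoint: "(H *v a) \<bullet> b = a \<bullet> (H *v b)"
  by (simp add: sorted_eigs_mult_vec inner_sum_left inner_sum_right inner_commute
      mult.commute mult.left_commute)

lemma sorted_eigs_inner_mult_vec: "i \<in> {1..CARD('n)} \<Longrightarrow> u i \<bullet> (H *v x) = lam i * (u i \<bullet> x)"
  using sorted_eigs_self_adjoint[of "u i" x] by (simp add: sorted_eigs_eigenvector)

lemma sorted_eigs_quadratic_form: "x \<bullet> (H *v x) = (\<Sum>i\<in>{1..CARD('n)}. lam i * (u i \<bullet> x)^2)"
  by (simp add: sorted_eigs_mult_vec inner_sum_right power2_eq_square inner_commute mult.assoc)

lemma sorted_eigs_quadratic_form_le: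
  assumes m: "m \<le> CARD('n)" and z: "z \<in> span (u ` {1..m})"
  shows "z \<bullet> (H *v z) \<le> lam m * norm z^2"
proof -
  have "lam i * (u i \<bullet> z)^2 \<le> lam m * (u i \<bullet> z)^2" if i: "i \<in> {1..CARD('n)}" for i
  proof (cases "i \<le> m")
    case True
    then show ?thesis
      using i m sorted_eigs_mono[of i m] by (intro mult_right_mono) auto
  next
    case False
    have "orthogonal (u i) z"
      using z by (rule orthogonal_to_span)
        (use i m False sorted_eigs_orthonormal in \<open>auto simp: orthogonal_def orthonormal_on_def\<close>)
    then show ?thesis
      by (simp add: orthogonal_def)
  qed
  then have "z \<bullet> (H *v z) \<le> (\<Sum>i\<in>{1..CARD('n)}. lam m * (u i \<bullet> z)^2)"
    unfolding sorted_eigs_quadratic_form by (rule sum_mono)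
  also have "\<dots> = lam m * norm z^2"
    by (simp add: sorted_eigs_parseval sum_distrib_left)
  finally show ?thesis .
qed

lemma sorted_eigs_quadratic_form_ge:
  assumes m: "m < CARD('n)" and z: "\<forall>i\<in>{1..m}. u i \<bullet> z = 0"
  shows "lam (Suc m) * norm z^2 \<le> z \<bullet> (H *v z)"
proof -
  have "lam (Suc m) * (u i \<bullet> z)^2 \<le> lam i * (u i \<bullet> z)^2" if i: "i \<in> {1..CARD('n)}" for i
  proof (cases "i \<le> m")
    case True
    then show ?thesis
      using i z by simp
  next
    case False
    then show ?thesis
      using i m sorted_eigs_mono[of "Suc m" i] by (intro mult_right_mono) auto
  qed
  then have "(\<Sum>i\<in>{1..CARD('n)}. lam (Suc m) * (u i \<bullet> z)^2) \<le> z \<bullet> (H *v z)"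
    unfolding sorted_eigs_quadratic_form by (rule sum_mono)
  then show ?thesis
    by (simp add: sorted_eigs_parseval sum_distrib_left)
qed

end

text \<open>Min-max argument: some nonzero \<open>z\<close> in the span of the first \<open>k + 1\<close> vectors of one
  eigenbasis is orthogonal to the first \<open>k\<close> vectors of the other.\<close>

lemma sorted_eigs_gt_transfer:
  fixes H :: "real^'n^'n"
  assumes eigs: "sorted_eigs H lam u" and eigs': "sorted_eigs H lam' u'"
    and k: "k < CARD('n)" and gt: "\<mu> < lam' (Suc k)"
  shows "\<mu> < lam (Suc k)"
proof -
  have u: "orthonormal_on u {1..Suc k}"
    by (rule orthonormal_on_subset[OF sorted_eigs_orthonormal[OF eigs]]) (use k in auto)
  have u': "orthonormal_on u' {1..k}"
    by (rule orthonormal_on_subset[OF sorted_eigs_orthonormal[OF eigs']]) (use k in auto)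
  have "card {1..k} < card (u ` {1..Suc k})"
    using orthonormal_on_inj_independent(1)[OF u] by (simp add: card_image)
  then obtain z where z: "z \<in> span (u ` {1..Suc k})" "z \<noteq> 0" "\<forall>j\<in>{1..k}. u' j \<bullet> z = 0"
    using exists_orthogonal_in_span[OF orthonormal_on_inj_independent(2)[OF u] u'] by auto
  have "lam' (Suc k) * norm z^2 \<le> z \<bullet> (H *v z)"
    by (rule sorted_eigs_quadratic_form_ge[OF eigs' k z(3)])
  also have "\<dots> \<le> lam (Suc k) * norm z^2"
    by (rule sorted_eigs_quadratic_form_le[OF eigs _ z(1)]) (use k in simp)
  finally have "lam' (Suc k) \<le> lam (Suc k)"
    using z(2) by (simp add: mult_le_cancel_right_pos)
  then show ?thesis
    using gt by simp
qed

section \<open>Distance between the computed and the exact projector\<close>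

lemma norm_mult_vec_le_opnorm: "norm (A *v x) \<le> opnorm A * norm x"
  unfolding opnorm_def using onorm[OF matrix_vector_mul_bounded_linear, of A x] by simp

lemma opnorm_nonneg: "0 \<le> opnorm A"
  unfolding opnorm_def by (rule onorm_pos_le) (rule matrix_vector_mul_bounded_linear)

lemma opnorm_le: "(\<And>x. norm (A *v x) \<le> b * norm x) \<Longrightarrow> opnorm A \<le> b"
  unfolding opnorm_def by (rule onorm_le)

lemma norm_linear_proj_on_sq_le:
  assumes P: "linear P" and f: "orthonormal_on f I" "finite I"
  shows "norm (P (proj_on f I x))^2 \<le> (\<Sum>i\<in>I. norm (P (f i))^2) * norm (proj_on f I x)^2"
proof -
  have "norm (P (proj_on f I x)) \<le> (\<Sum>i\<in>I. \<bar>f i \<bullet> x\<bar> * norm (P (f i)))"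
    unfolding proj_on_def linear_sum[OF P] linear_scale[OF P] by (rule order_trans[OF norm_sum]) simp
  then have "norm (P (proj_on f I x))^2 \<le> (\<Sum>i\<in>I. \<bar>f i \<bullet> x\<bar> * norm (P (f i)))^2"
    by (rule power_mono) simp
  also have "\<dots> \<le> (\<Sum>i\<in>I. \<bar>f i \<bullet> x\<bar>^2) * (\<Sum>i\<in>I. norm (P (f i))^2)"
    by (rule Cauchy_Schwarz_ineq_sum)
  finally show ?thesis
    by (simp add: norm_proj_on_sq[OF f] mult.commute)
qed

lemma norm_proj_on_residual_sq_le:
  assumes e: "orthonormal_on e J" "finite J" and f: "orthonormal_on f I" "finite I"
  shows "norm (proj_on e J (x - proj_on f I x))^2
           \<le> (\<Sum>j\<in>J. norm (e j - proj_on f I (e j))^2) * norm (x - proj_on f I x)^2"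
proof -
  let ?y = "x - proj_on f I x"
  have "(e j \<bullet> ?y)^2 \<le> norm (e j - proj_on f I (e j))^2 * norm ?y^2" for j
  proof -
    have "e j \<bullet> ?y = (e j - proj_on f I (e j)) \<bullet> ?y"
      using proj_on_orthogonal_residual[OF f] by (simp add: inner_diff_left)
    then have "\<bar>e j \<bullet> ?y\<bar> \<le> norm (e j - proj_on f I (e j)) * norm ?y"
      by (metis Cauchy_Schwarz_ineq2)
    then have "\<bar>e j \<bullet> ?y\<bar>^2 \<le> (norm (e j - proj_on f I (e j)) * norm ?y)^2"
      by (rule power_mono) simp
    then show ?thesis
      by (simp add: power_mult_distrib)
  qed
  then have "(\<Sum>j\<in>J. (e j \<bullet> ?y)^2) \<le> (\<Sum>j\<in>J. norm (e j - proj_on f I (e j))^2 * norm ?y^2)"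
    by (rule sum_mono)
  then show ?thesis
    by (simp add: norm_proj_on_sq[OF e] sum_distrib_right)
qed

text \<open>Both sides equal \<open>card D - (\<Sum>i\<in>D. \<Sum>j\<in>I. (u i \<bullet> v j)\<^sup>2)\<close>.\<close>

lemma sum_norm_proj_on_swap:
  fixes u :: "'i \<Rightarrow> 'a::euclidean_space"
  assumes u: "orthonormal_on u (D \<union> D')" "finite (D \<union> D')" "card (D \<union> D') = DIM('a)" "D \<inter> D' = {}"
    and v: "orthonormal_on v I" "finite I" "card I = card D"
  shows "(\<Sum>j\<in>I. norm (proj_on u D' (v j))^2) = (\<Sum>i\<in>D. norm (u i - proj_on v I (u i))^2)"
proof -
  have u': "orthonormal_on u D'" "finite D'"
    using u(1,2) orthonormal_on_subset by auto
  have leak_v: "norm (proj_on u D' (v j))^2 = 1 - (\<Sum>i\<in>D. (u i \<bullet> v j)^2)" if j: "j \<in> I" for j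
  proof -
    have "1 = (\<Sum>i\<in>D \<union> D'. (u i \<bullet> v j)^2)"
      using parseval[OF u(1-3), of "v j"] orthonormal_on_norm[OF v(1) j] by simp
    also have "\<dots> = (\<Sum>i\<in>D. (u i \<bullet> v j)^2) + (\<Sum>i\<in>D'. (u i \<bullet> v j)^2)"
      using u(2,4) by (simp add: sum.union_disjoint)
    finally show ?thesis
      by (simp add: norm_proj_on_sq[OF u'])
  qed
  have leak_u: "norm (u i - proj_on v I (u i))^2 = 1 - (\<Sum>j\<in>I. (u i \<bullet> v j)^2)" if i: "i \<in> D" for i
    using norm_proj_on_Pythagorean[OF v(1,2), of "u i"] norm_proj_on_sq[OF v(1,2), of "u i"]
      orthonormal_on_norm[OF u(1)] i by (simp add: inner_commute)
  have "(\<Sum>j\<in>I. norm (proj_on u D' (v j))^2) = real (card I) - (\<Sum>j\<in>I. \<Sum>i\<in>D. (u i \<bullet> v j)^2)"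
    by (simp add: leak_v sum_subtractf)
  also have "\<dots> = real (card D) - (\<Sum>i\<in>D. \<Sum>j\<in>I. (u i \<bullet> v j)^2)"
    by (subst sum.swap) (simp add: v(3))
  also have "\<dots> = (\<Sum>i\<in>D. norm (u i - proj_on v I (u i))^2)"
    by (simp add: leak_u sum_subtractf)
  finally show ?thesis .
qed

lemma norm_diff_proj_on_sq:
  fixes u :: "'i \<Rightarrow> 'a::euclidean_space"
  assumes u: "orthonormal_on u (D \<union> D')" "finite (D \<union> D')" "card (D \<union> D') = DIM('a)" "D \<inter> D' = {}"
  shows "norm (y - proj_on u D x)^2 = norm (proj_on u D' y)^2 + norm (proj_on u D (x - y))^2"
proof -
  define a b where "a = proj_on u D y" and "b = proj_on u D' y"
  have "y = proj_on u (D \<union> D') y"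
    using proj_on_eq_self[OF u(1-3)] by simp
  also have "\<dots> = a + b"
    unfolding a_def b_def proj_on_def using u(2,4) by (simp add: sum.union_disjoint)
  moreover have "proj_on u D (x - y) = proj_on u D x - a"
    unfolding a_def by (rule linear_diff[OF linear_proj_on])
  ultimately have "y - proj_on u D x = b + - proj_on u D (x - y)"
    by simp
  moreover have "b \<bullet> proj_on u D (x - y) = 0"
    using u(1,4) unfolding b_def proj_on_def inner_sum_left inner_sum_right
    by (intro sum.neutral ballI) (auto simp: orthonormal_on_def)
  ultimately show ?thesis
    using norm_add_Pythagorean[of b "- proj_on u D (x - y)"] by (simp add: orthogonal_def b_def)
qed

lemma opnorm_sum_outer_diff_sq_le:
  fixes v u :: "nat \<Rightarrow> real^'n"
  assumes v: "orthonormal_on v {..<k}" and u: "orthonormal_on u {1..CARD('n)}" and k: "k \<le> CARD('n)"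
  shows "(opnorm ((\<Sum>i<k. outer (v i) (v i)) - (\<Sum>i<k. outer (u (i + 1)) (u (i + 1)))))^2
           \<le> (\<Sum>j<k. norm (proj_on u {Suc k..CARD('n)} (v j))^2)"
    (is "(opnorm ?M)^2 \<le> ?A")
proof -
  define T where "T = proj_on v {..<k}"
  have D: "{1..CARD('n)} = {1..k} \<union> {Suc k..CARD('n)}" "{1..k} \<inter> {Suc k..CARD('n)} = {}"
    using k by auto
  have basis: "orthonormal_on u ({1..k} \<union> {Suc k..CARD('n)})" "finite ({1..k} \<union> {Suc k..CARD('n)})"
      "card ({1..k} \<union> {Suc k..CARD('n)}) = DIM(real^'n)"
    using u k D by (simp_all add: card_Un_disjoint flip: D(1))
  have A_swap: "?A = (\<Sum>i\<in>{1..k}. norm (u i - T (u i))^2)"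
    unfolding T_def by (rule sum_norm_proj_on_swap[OF basis D(2) v]) simp_all
  have "norm (?M *v x) \<le> sqrt ?A * norm x" for x
  proof -
    have "?M *v x = T x - proj_on u {1..k} x"
      by (simp add: matrix_vector_mult_diff_rdistrib sum_outer_mult_vec T_def proj_on_def
          sum.atLeast1_atMost_eq)
    then have "norm (?M *v x)^2 = norm (proj_on u {Suc k..CARD('n)} (T x))^2 + norm (proj_on u {1..k} (x - T x))^2"
      using norm_diff_proj_on_sq[OF basis D(2)] by simp
    also have "\<dots> \<le> ?A * norm (T x)^2 + ?A * norm (x - T x)^2"
    proof (rule add_mono)
      show "norm (proj_on u {Suc k..CARD('n)} (T x))^2 \<le> ?A * norm (T x)^2"
        unfolding T_def by (rule norm_linear_proj_on_sq_le[OF linear_proj_on v]) simp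
      show "norm (proj_on u {1..k} (x - T x))^2 \<le> ?A * norm (x - T x)^2"
        unfolding A_swap T_def
        by (rule norm_proj_on_residual_sq_le[OF orthonormal_on_subset[OF u] _ v]) (use k in auto)
    qed
    also have "\<dots> = ?A * norm x^2"
      using norm_proj_on_Pythagorean[OF v, of x] by (simp add: T_def distrib_left)
    finally have "norm (?M *v x) \<le> sqrt (?A * norm x^2)"
      by (rule real_le_rsqrt)
    then show ?thesis
      by (simp add: real_sqrt_mult)
  qed
  then have "opnorm ?M \<le> sqrt ?A"
    by (rule opnorm_le)
  then have "(opnorm ?M)^2 \<le> (sqrt ?A)^2"
    using opnorm_nonneg by (rule power_mono)
  then show ?thesis
    by (simp add: sum_nonneg)
qed

definition deflated_residual :: "real^'n^'n \<Rightarrow> (nat \<Rightarrow> real^'n) \<Rightarrow> nat \<Rightarrow> real^'n" where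
  "deflated_residual H v j =
     H *v v j - (\<Sum>i<j. (v i \<bullet> (H *v v j)) *\<^sub>R v i) - (v j \<bullet> (H *v v j)) *\<^sub>R v j"

lemma Pmat_take_eq_deflated_residual:
  "j < length vs \<Longrightarrow> Pmat (take j vs) (vs ! j) *v (H *v vs ! j) = deflated_residual H ((!) vs) j"
  by (simp add: Pmat_take_mult_vec deflated_residual_def)

lemma inner_mult_vec_le_deflated_residual:
  assumes H: "\<And>a b. (H *v a) \<bullet> b = a \<bullet> (H *v b)"
    and v: "orthonormal_on v {..<k}" and ij: "i < j" "j < k"
  shows "\<bar>v i \<bullet> (H *v v j)\<bar> \<le> norm (deflated_residual H v i)"
proof -
  have "(\<Sum>l<i. (v l \<bullet> (H *v v i)) *\<^sub>R v l) \<bullet> v j = 0"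
    unfolding inner_sum_left using v ij by (intro sum.neutral) (auto simp: orthonormal_on_def)
  moreover have "v i \<bullet> v j = 0"
    using v ij by (auto simp: orthonormal_on_def)
  ultimately have "deflated_residual H v i \<bullet> v j = v i \<bullet> (H *v v j)"
    by (simp add: deflated_residual_def inner_diff_left H)
  then have "\<bar>v i \<bullet> (H *v v j)\<bar> \<le> norm (deflated_residual H v i) * norm (v j)"
    by (metis Cauchy_Schwarz_ineq2)
  then show ?thesis
    using orthonormal_on_norm[OF v] ij by simp
qed

lemma norm_proj_on_shift_ge:
  fixes H :: "real^'n^'n"
  assumes eigs: "sorted_eigs H lam u" and \<mu>: "0 \<le> \<mu>" "\<mu> \<le> lam (Suc k) - \<rho>"
  shows "\<mu> * norm (proj_on u {Suc k..CARD('n)} z) \<le> norm (proj_on u {Suc k..CARD('n)} (H *v z - \<rho> *\<^sub>R z))"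
proof -
  let ?D = "{Suc k..CARD('n)}"
  have u: "orthonormal_on u ?D"
    by (rule orthonormal_on_subset[OF sorted_eigs_orthonormal[OF eigs]]) auto
  have "(\<mu> * norm (proj_on u ?D z))^2 = (\<Sum>l\<in>?D. \<mu>^2 * (u l \<bullet> z)^2)"
    by (simp add: power_mult_distrib norm_proj_on_sq[OF u] sum_distrib_left)
  also have "\<dots> \<le> (\<Sum>l\<in>?D. (u l \<bullet> (H *v z - \<rho> *\<^sub>R z))^2)"
  proof (rule sum_mono)
    fix l assume l: "l \<in> ?D"
    then have "\<mu> \<le> lam l - \<rho>"
      using sorted_eigs_mono[OF eigs, of "Suc k" l] \<mu>(2) by auto
    then have "\<mu>^2 \<le> (lam l - \<rho>)^2"
      using \<mu>(1) by (rule power_mono)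
    moreover have "u l \<bullet> (H *v z - \<rho> *\<^sub>R z) = (lam l - \<rho>) * (u l \<bullet> z)"
      using l sorted_eigs_inner_mult_vec[OF eigs, of l z] by (simp add: inner_diff_right algebra_simps)
    ultimately show "\<mu>^2 * (u l \<bullet> z)^2 \<le> (u l \<bullet> (H *v z - \<rho> *\<^sub>R z))^2"
      by (simp add: power_mult_distrib mult_right_mono)
  qed
  also have "\<dots> = norm (proj_on u ?D (H *v z - \<rho> *\<^sub>R z))^2"
    by (simp add: norm_proj_on_sq[OF u])
  finally show ?thesis
    by (rule power2_le_imp_le) simp
qed

text \<open>The component of the \<open>j\<close>-th output outside the span of the \<open>k\<close> lowest eigenvectors
  is controlled by its own residual and, through the couplings \<open>v i \<bullet> H v j\<close>, by the residuals
  of the earlier outputs; the negative Rayleigh quotient keeps the shifted spectrum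
  on that component above \<open>\<mu>\<close>.\<close>

lemma leakage_le:
  fixes H :: "real^'n^'n"
  assumes eigs: "sorted_eigs H lam u" and \<mu>: "0 \<le> \<mu>" "\<mu> \<le> lam (Suc k)"
    and v: "orthonormal_on v {..<k}" and j: "j < k" and neg: "v j \<bullet> (H *v v j) < 0"
    and res: "\<And>i. i \<le> j \<Longrightarrow> norm (deflated_residual H v i) \<le> e"
  shows "\<mu> * norm (proj_on u {Suc k..CARD('n)} (v j)) \<le> real (Suc j) * e"
proof -
  let ?P = "proj_on u {Suc k..CARD('n)}"
  let ?c = "\<lambda>i. v i \<bullet> (H *v v j)"
  have u: "orthonormal_on u {Suc k..CARD('n)}"
    by (rule orthonormal_on_subset[OF sorted_eigs_orthonormal[OF eigs]]) auto
  have "H *v v j - ?c j *\<^sub>R v j = deflated_residual H v j + (\<Sum>i<j. ?c i *\<^sub>R v i)"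
    by (simp add: deflated_residual_def)
  then have split: "?P (H *v v j - ?c j *\<^sub>R v j) = ?P (deflated_residual H v j) + (\<Sum>i<j. ?c i *\<^sub>R ?P (v i))"
    by (simp add: linear_add[OF linear_proj_on] linear_sum[OF linear_proj_on] linear_scale[OF linear_proj_on])
  have c: "\<bar>?c i\<bar> * norm (?P (v i)) \<le> e" if "i < j" for i
  proof -
    have "\<bar>?c i\<bar> \<le> e"
      using inner_mult_vec_le_deflated_residual[OF sorted_eigs_self_adjoint[OF eigs] v that j] res[of i] that
      by simp
    moreover have "norm (?P (v i)) \<le> 1"
      using norm_proj_on_le[OF u, of "v i"] orthonormal_on_norm[OF v, of i] that j by simp
    ultimately have "\<bar>?c i\<bar> * norm (?P (v i)) \<le> e * 1"
      by (intro mult_mono) auto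
    then show ?thesis
      by simp
  qed
  have "\<mu> * norm (?P (v j)) \<le> norm (?P (H *v v j - ?c j *\<^sub>R v j))"
    using \<mu> neg by (intro norm_proj_on_shift_ge[OF eigs]) auto
  also have "\<dots> \<le> norm (?P (deflated_residual H v j)) + norm (\<Sum>i<j. ?c i *\<^sub>R ?P (v i))"
    unfolding split by (rule norm_triangle_ineq)
  also have "\<dots> \<le> norm (?P (deflated_residual H v j)) + (\<Sum>i<j. \<bar>?c i\<bar> * norm (?P (v i)))"
    using norm_sum[of "\<lambda>i. ?c i *\<^sub>R ?P (v i)" "{..<j}"] by simp
  also have "\<dots> \<le> e + (\<Sum>i<j. e)"
    using norm_proj_on_le[OF u, of "deflated_residual H v j"] res[of j] c by (intro add_mono sum_mono) auto
  finally show ?thesis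
    by (simp add: algebra_simps)
qed

lemma sum_outer_diff_error_le:
  fixes H :: "real^'n^'n"
  assumes eigs: "sorted_eigs H lam u" and k: "k \<le> CARD('n)" and \<mu>: "0 < \<mu>" "\<mu> \<le> lam (Suc k)"
    and v: "orthonormal_on v {..<k}" and neg: "\<And>j. j < k \<Longrightarrow> v j \<bullet> (H *v v j) < 0"
    and res: "\<And>j. j < k \<Longrightarrow> norm (deflated_residual H v j) \<le> e"
  shows "(opnorm ((\<Sum>i<k. outer (v i) (v i)) - (\<Sum>i<k. outer (u (i + 1)) (u (i + 1)))))^2
           \<le> real k ^ 3 * e^2 / \<mu>^2"
proof -
  let ?P = "proj_on u {Suc k..CARD('n)}"
  have "norm (?P (v j))^2 \<le> (real k * e / \<mu>)^2" if j: "j < k" for j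
  proof -
    have e: "0 \<le> e"
      using res[OF j] norm_ge_zero order_trans by blast
    have "\<mu> * norm (?P (v j)) \<le> real (Suc j) * e"
      by (rule leakage_le[OF eigs _ \<mu>(2) v j neg[OF j]]) (use \<mu>(1) res j in auto)
    also have "\<dots> \<le> real k * e"
      using j e by (intro mult_right_mono) auto
    finally have "norm (?P (v j)) \<le> real k * e / \<mu>"
      using \<mu>(1) by (simp add: pos_le_divide_eq mult.commute)
    then show ?thesis
      by (rule power_mono) simp
  qed
  then have "(\<Sum>j<k. norm (?P (v j))^2) \<le> (\<Sum>j<k. (real k * e / \<mu>)^2)"
    by (rule sum_mono) simp
  also have "\<dots> = real k ^ 3 * e^2 / \<mu>^2"
    by (simp add: power_divide power_mult_distrib power3_eq_cube power2_eq_square)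
  finally show ?thesis
    using opnorm_sum_outer_diff_sq_le[OF v sorted_eigs_orthonormal[OF eigs] k] by linarith
qed

lemma orthonormal_on_nth:
  assumes vs: "orth_list vs" "0 \<notin> set vs"
  shows "orthonormal_on ((!) vs) {..<length vs}"
  unfolding orthonormal_on_def
proof (intro ballI)
  fix i j assume ij: "i \<in> {..<length vs}" "j \<in> {..<length vs}"
  then have "vs ! i \<in> set vs"
    by simp
  then have "norm (vs ! i) = 1"
    using vs by (auto simp: orth_list_def)
  then show "vs ! i \<bullet> vs ! j = (if i = j then 1 else 0)"
    using vs(1) ij by (auto simp: orth_list_def norm_eq_1)
qed

lemma algorithm1_output_error:
  fixes H :: "real^'n^'n"
  assumes eigs: "sorted_eigs H lam u" and k: "k \<le> CARD('n)" and \<mu>: "0 < \<mu>" "\<mu> \<le> lam (Suc k)"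
    and L: "0 \<le> L" and \<epsilon>: "0 \<le> \<epsilon>"
    and vinit: "length vinit = k" "\<forall>v\<in>set vinit. norm v = 1"
    and out: "algorithm1 \<alpha> Hs H L \<epsilon> vinit ws = Some vs"
    and neg: "\<forall>v\<in>set vs. v \<bullet> (H *v v) < 0"
  shows "(opnorm ((\<Sum>i<k. outer (vs ! i) (vs ! i)) - (\<Sum>i<k. outer (u (i + 1)) (u (i + 1)))))^2
           \<le> real k ^ 3 * L^2 * \<epsilon> / \<mu>^2"
proof -
  have "length vs = k" "orth_list vs" and stop: "\<forall>j<k. \<not> loop_cond H L \<epsilon> (take j vs) (vs ! j)"
    using run_Some_outputs[of "[]" vinit \<alpha> Hs H L \<epsilon> 0 ws vs] out vinit
    by (simp_all add: algorithm1_def)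
  moreover have "0 \<notin> set vs"
    using neg by force
  ultimately have v: "orthonormal_on ((!) vs) {..<k}"
    using orthonormal_on_nth by metis
  have neg_nth: "vs ! j \<bullet> (H *v vs ! j) < 0" if "j < k" for j
    using neg that \<open>length vs = k\<close> by simp
  have res: "norm (deflated_residual H ((!) vs) j) \<le> L * sqrt \<epsilon>" if j: "j < k" for j
  proof -
    have "\<not> L^2 * \<epsilon> \<le> norm (deflated_residual H ((!) vs) j)^2"
      using stop j \<open>length vs = k\<close> by (simp add: loop_cond_def Pmat_take_eq_deflated_residual)
    then have "norm (deflated_residual H ((!) vs) j)^2 \<le> L^2 * \<epsilon>"
      by simp
    then have "norm (deflated_residual H ((!) vs) j) \<le> sqrt (L^2 * \<epsilon>)"
      by (rule real_le_rsqrt)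
    then show ?thesis
      using L by (simp add: real_sqrt_mult)
  qed
  have "(opnorm ((\<Sum>i<k. outer (vs ! i) (vs ! i)) - (\<Sum>i<k. outer (u (i + 1)) (u (i + 1)))))^2
           \<le> real k ^ 3 * (L * sqrt \<epsilon>)^2 / \<mu>^2"
    by (rule sum_outer_diff_error_le[OF eigs k \<mu> v neg_nth res])
  then show ?thesis
    using \<epsilon> by (simp add: power_mult_distrib)
qed

lemma AE_algorithm1_output_error:
  fixes H :: "real^'n^'n"
  assumes eigs: "sorted_eigs H lam u" and k: "k \<le> CARD('n)" and \<mu>: "0 < \<mu>" "\<mu> \<le> lam (Suc k)"
    and L: "0 \<le> L" and \<epsilon>: "0 \<le> \<epsilon>"
    and vinit: "length vinit = k" "\<forall>v\<in>set vinit. norm v = 1"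
    and neg: "\<forall>\<^sub>F ws in F. \<forall>vs. algorithm1 \<alpha> Hs H L \<epsilon> vinit ws = Some vs \<longrightarrow> (\<forall>v\<in>set vs. v \<bullet> (H *v v) < 0)"
    and B: "real k ^ 3 * L^2 * \<epsilon> / \<mu>^2 \<le> B"
  shows "\<forall>\<^sub>F ws in F. \<forall>vs. algorithm1 \<alpha> Hs H L \<epsilon> vinit ws = Some vs \<longrightarrow>
    (opnorm ((\<Sum>i<k. outer (vs ! i) (vs ! i)) - (\<Sum>i<k. outer (u (i + 1)) (u (i + 1)))))^2 \<le> B"
  using neg by (rule eventually_mono)
    (use algorithm1_output_error[OF eigs k \<mu> L \<epsilon> vinit] B in \<open>blast intro: order_trans\<close>)

lemma Qconst_ge:
  fixes lam :: "nat \<Rightarrow> real"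
  assumes \<mu>: "0 < \<mu>"
  shows "1 / \<mu>^2 \<le> Qconst (neg_gaps lam d) \<mu> L" "1 \<le> Qconst (neg_gaps lam d) \<mu> L"
proof -
  let ?G = "neg_gaps lam d"
  have "?G \<subseteq> (\<lambda>(i, j). lam j - lam i) ` ({1..d} \<times> {1..d})"
    by (auto simp: neg_gaps_def image_iff)
  then have "finite ?G"
    by (rule finite_subset) simp
  moreover have "\<forall>g\<in>?G. 0 < g"
    by (auto simp: neg_gaps_def)
  ultimately have "?G \<noteq> {} \<Longrightarrow> 0 < Min ?G"
    using Min_in by blast
  moreover define X where "X = (if ?G = {} then \<mu>^2 else min ((Min ?G)^2 / 4) (\<mu>^2))"
  ultimately have "0 < X" "X \<le> \<mu>^2"
    using \<mu> by (cases "?G = {}"; simp)+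
  then have "1 / \<mu>^2 \<le> 1 / X"
    by (simp add: frac_le)
  then show "1 / \<mu>^2 \<le> Qconst ?G \<mu> L"
    unfolding Qconst_def X_def by linarith
  show "1 \<le> Qconst ?G \<mu> L"
    unfolding Qconst_def by simp
qed

lemma error_bound_le_zbar:
  fixes k d :: nat
  assumes k: "1 \<le> k" and d: "0 < d" and \<mu>: "0 < \<mu>" "\<mu> < L" and \<epsilon>: "0 < \<epsilon>"
    and Q: "1 / \<mu>^2 \<le> Q" "1 \<le> Q"
  shows "real k ^ 3 * L^2 * \<epsilon> / \<mu>^2
           \<le> real k * (sqrt (L ^ (2 * k) * Q ^ k * (fact k)^2 * \<epsilon> / real d))^2 * real d"
proof -
  define A where "A = L^2 * Q"
  have "\<mu>^2 \<le> L^2"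
    using \<mu> by (intro power_mono) auto
  then have L\<mu>: "1 \<le> L^2 / \<mu>^2"
    using \<mu> by simp
  have "L^2 * (1 / \<mu>^2) \<le> L^2 * Q"
    using Q(1) by (rule mult_left_mono) simp
  then have A: "L^2 / \<mu>^2 \<le> A"
    by (simp add: A_def)
  have "A \<le> A ^ k"
    using power_increasing[OF k, of A] A L\<mu> by simp
  moreover have "real k \<le> fact k"
    using fact_ge_self[of k] by (metis of_nat_fact of_nat_le_iff)
  then have "(real k)^2 \<le> (fact k)^2"
    by (rule power_mono) simp
  ultimately have "L^2 / \<mu>^2 * (real k)^2 \<le> A ^ k * (fact k)^2"
    using A L\<mu> by (intro mult_mono) auto
  then have "real k * (L^2 / \<mu>^2 * (real k)^2 * \<epsilon>) \<le> real k * (A ^ k * (fact k)^2 * \<epsilon>)"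
    using \<epsilon> by (intro mult_left_mono mult_right_mono) auto
  also have "\<dots> = real k * (sqrt (L ^ (2 * k) * Q ^ k * (fact k)^2 * \<epsilon> / real d))^2 * real d"
    using d \<epsilon> Q(2) by (simp add: A_def power_mult power_mult_distrib)
  finally show ?thesis
    by (simp add: power2_eq_square power3_eq_cube field_simps)
qed

section \<open>Measurability\<close>

lemma bounded_bilinear_matrix_vector_mult:
  "bounded_bilinear (\<lambda>(A::real^'n^'m) (x::real^'n). A *v x)"
proof -
  have "bilinear (\<lambda>(A::real^'n^'m) (x::real^'n). A *v x)"
    unfolding bilinear_def
    by (auto intro!: linearI simp: matrix_vector_mult_add_rdistrib scaleR_matrix_vector_assoc
        matrix_vector_right_distrib matrix_vector_mult_scaleR)
  then show ?thesis
    by (simp add: bilinear_conv_bounded_bilinear)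
qed

lemma borel_measurable_matrix_vector_mult [measurable (raw)]:
  fixes f :: "'a \<Rightarrow> real^'n^'m" and g :: "'a \<Rightarrow> real^'n"
  assumes "f \<in> borel_measurable N" "g \<in> borel_measurable N"
  shows "(\<lambda>y. f y *v g y) \<in> borel_measurable N"
proof -
  have "continuous_on UNIV (\<lambda>p::(real^'n^'m) \<times> (real^'n). fst p *v snd p)"
    by (rule bounded_bilinear.continuous_on[OF bounded_bilinear_matrix_vector_mult])
      (auto intro: continuous_intros)
  then show ?thesis
    using borel_measurable_continuous_Pair[OF assms, of "\<lambda>A x. A *v x"] by simp
qed

lemma borel_measurable_unitize [measurable (raw)]:
  "f \<in> borel_measurable N \<Longrightarrow> (\<lambda>y. unitize (f y)) \<in> borel_measurable N"
  unfolding unitize_def by measurable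

text \<open>The earlier outputs of the algorithm are random, so measurability statements take the list
  of previous vectors as a list \<open>Fs\<close> of measurable functions.\<close>

lemma borel_measurable_sum_list_components:
  fixes Fs :: "('a \<Rightarrow> real^'n) list"
  assumes "\<forall>F\<in>set Fs. F \<in> borel_measurable N" "z \<in> borel_measurable N"
  shows "(\<lambda>y. sum_list (map (\<lambda>F. (F y \<bullet> z y) *\<^sub>R F y) Fs)) \<in> borel_measurable N"
  using assms(1)
proof (induction Fs)
  case Nil
  then show ?case by simp
next
  case (Cons F Fs)
  have [measurable]: "F \<in> borel_measurable N" "z \<in> borel_measurable N"
    "(\<lambda>y. sum_list (map (\<lambda>F. (F y \<bullet> z y) *\<^sub>R F y) Fs)) \<in> borel_measurable N"
    using Cons assms(2) by auto
  show ?case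
    by simp measurable
qed

lemma borel_measurable_Pmat_mult_vec:
  fixes Fs :: "('a \<Rightarrow> real^'n) list"
  assumes "\<forall>F\<in>set Fs. F \<in> borel_measurable N" "v \<in> borel_measurable N" "z \<in> borel_measurable N"
  shows "(\<lambda>y. Pmat (map (\<lambda>F. F y) Fs) (v y) *v z y) \<in> borel_measurable N"
proof -
  have [measurable]: "v \<in> borel_measurable N" "z \<in> borel_measurable N"
    "(\<lambda>y. sum_list (map (\<lambda>F. (F y \<bullet> z y) *\<^sub>R F y) Fs)) \<in> borel_measurable N"
    using borel_measurable_sum_list_components assms by auto
  show ?thesis
    unfolding Pmat_mult_vec proj_perp_def map_map o_def by measurable
qed

lemma borel_measurable_phase_iter:
  fixes Fs :: "('a \<Rightarrow> real^'n) list" and Hs :: "'w \<Rightarrow> real^'n^'n"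
  assumes Fs: "\<forall>F\<in>set Fs. F \<in> borel_measurable N" and V: "V \<in> borel_measurable N"
    and G: "G \<in> N \<rightarrow>\<^sub>M stream_space M" and Hs: "Hs \<in> borel_measurable M"
  shows "(\<lambda>y. phase_iter \<alpha> Hs (map (\<lambda>F. F y) Fs) (V y) (snth (G y)) n) \<in> borel_measurable N"
proof (induction n)
  case 0
  then show ?case using V by simp
next
  case (Suc n)
  let ?v = "\<lambda>y. phase_iter \<alpha> Hs (map (\<lambda>F. F y) Fs) (V y) (snth (G y)) n"
  have [measurable]: "?v \<in> borel_measurable N"
    by (rule Suc)
  have "(\<lambda>y. Hs (G y !! n)) \<in> borel_measurable N"
    using measurable_compose[OF measurable_compose[OF G measurable_snth] Hs] by (simp add: o_def)
  then have [measurable]: "(\<lambda>y. Hs (G y !! n) *v ?v y) \<in> borel_measurable N"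
    by measurable
  have [measurable]: "(\<lambda>y. Pmat (map (\<lambda>F. F y) Fs) (?v y) *v (Hs (G y !! n) *v ?v y)) \<in> borel_measurable N"
    by (rule borel_measurable_Pmat_mult_vec[OF Fs]) measurable
  show ?case
    by (simp add: Let_def) measurable
qed

lemma pred_loop_cond:
  fixes Fs :: "('a \<Rightarrow> real^'n) list"
  assumes Fs: "\<forall>F\<in>set Fs. F \<in> borel_measurable N" and v: "v \<in> borel_measurable N"
  shows "Measurable.pred N (\<lambda>y. loop_cond H L \<epsilon> (map (\<lambda>F. F y) Fs) (v y))"
proof -
  have [measurable]: "v \<in> borel_measurable N"
    by (rule v)
  have [measurable]: "(\<lambda>y. Pmat (map (\<lambda>F. F y) Fs) (v y) *v (H *v v y)) \<in> borel_measurable N"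
    by (rule borel_measurable_Pmat_mult_vec[OF Fs v]) measurable
  show ?thesis
    unfolding loop_cond_def by measurable
qed

lemma pred_run_not_None:
  fixes Fs :: "('a \<Rightarrow> real^'n) list" and Hs :: "'w \<Rightarrow> real^'n^'n"
  assumes "\<forall>F\<in>set Fs. F \<in> borel_measurable N"
    and "G \<in> N \<rightarrow>\<^sub>M stream_space M" and Hs: "Hs \<in> borel_measurable M"
  shows "Measurable.pred N (\<lambda>y. run \<alpha> Hs H L \<epsilon> (map (\<lambda>F. F y) Fs) 0 us (snth (G y)) \<noteq> None)"
  using assms(1,2)
proof (induction us arbitrary: Fs G)
  case Nil
  then show ?case by simp
next
  case (Cons u us)
  let ?ps = "\<lambda>y. map (\<lambda>F. F y) Fs"
  define V where "V = (\<lambda>y. phase_start (?ps y) u)"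
  have "(\<lambda>y. sum_list (map (\<lambda>F. (F y \<bullet> u) *\<^sub>R F y) Fs)) \<in> borel_measurable N"
    using borel_measurable_sum_list_components[OF Cons.prems(1), of "\<lambda>_. u"] by simp
  then have V: "V \<in> borel_measurable N"
    unfolding V_def phase_start_def proj_perp_def map_map o_def
    by (cases "Fs = []") (simp_all add: measurable_const borel_measurable_unitize borel_measurable_diff)
  define It where "It = (\<lambda>n y. phase_iter \<alpha> Hs (?ps y) (V y) (snth (G y)) n)"
  have It: "It n \<in> borel_measurable N" for n
    unfolding It_def by (rule borel_measurable_phase_iter[OF Cons.prems(1) V Cons.prems(2) Hs])
  have "Measurable.pred N (\<lambda>y. loop_cond H L \<epsilon> (?ps y) (It n y))" for n
    by (rule pred_loop_cond[OF Cons.prems(1) It])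
  moreover have "Measurable.pred N
      (\<lambda>y. run \<alpha> Hs H L \<epsilon> (map (\<lambda>F. F y) (Fs @ [It n])) 0 us (snth (sdrop n (G y))) \<noteq> None)" for n
    using Cons.prems(1) It measurable_compose[OF Cons.prems(2) measurable_sdrop]
    by (intro Cons.IH) (auto simp: o_def)
  moreover have "(\<lambda>i. G y !! (n + i)) = snth (sdrop n (G y))" for n y
    by (simp add: fun_eq_iff sdrop_snth)
  ultimately show ?case
    unfolding run_Cons_not_None_iff It_def V_def by simp measurable
qed

section \<open>One stochastic step\<close>

text \<open>Renormalising \<open>y = v - a g\<close>, with \<open>g \<bottom> v\<close> and \<open>norm g = n\<close>, divides the Rayleigh quotient
  numerator \<open>f - 2 a t + a\<^sup>2 q\<close> by \<open>norm y\<^sup>2 = 1 + a\<^sup>2 n\<^sup>2\<close>; the error of dropping the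
  denominator is \<open>O(a\<^sup>2)\<close>.\<close>

lemma descent_correction_le:
  fixes a n K f t q :: real
  assumes a: "0 \<le> a" and K: "0 \<le> K" and f: "\<bar>f\<bar> \<le> K" and t: "\<bar>t\<bar> \<le> n * K"
    and q: "\<bar>q\<bar> \<le> K * n^2"
  defines "m \<equiv> a^2 * n^2"
  shows "a^2 * q - f * m + 2 * a * t * m \<le> 3 * K * m * (1 + m)"
proof -
  have m: "0 \<le> m"
    by (simp add: m_def)
  have "a^2 * q \<le> K * m"
    using q m unfolding m_def by (metis abs_le_D1 mult.left_commute mult_left_mono zero_le_power2)
  moreover have "- (f * m) \<le> K * m"
    using f m by (metis abs_le_D2 minus_mult_left mult_right_mono)
  moreover have "a * t * m \<le> K * (a * n) * m"
    using mult_right_mono[OF mult_left_mono[OF abs_le_D1[OF t] a] m] by (simp add: algebra_simps)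
  \<comment> \<open>\<open>2 a n \<le> 1 + a\<^sup>2 n\<^sup>2\<close> absorbs the cross term\<close>
  moreover have "0 \<le> K * m * (1 - a * n)^2" "0 \<le> K * m * m"
    using K m by simp_all
  moreover have "K * m * (1 - a * n)^2 = K * m - 2 * (K * (a * n) * m) + K * m * m"
    by (simp add: m_def power2_eq_square algebra_simps)
  ultimately have "a^2 * q - f * m + 2 * (a * t * m) \<le> 3 * (K * m) + 3 * (K * m * m)"
    by linarith
  then show ?thesis
    by (simp add: algebra_simps)
qed

lemma descent_quotient_le:
  fixes a n K f t q G :: real
  assumes a: "0 \<le> a" and n: "0 \<le> n" and K: "0 \<le> K" and f: "\<bar>f\<bar> \<le> K" and t: "\<bar>t\<bar> \<le> n * K"
    and q: "\<bar>q\<bar> \<le> K * n^2" and nG: "n \<le> G"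
  shows "(f - 2 * a * t + a^2 * q) / (1 + a^2 * n^2) \<le> f - 2 * a * t + 3 * K * G^2 * a^2"
proof -
  define m where "m = a^2 * n^2"
  have D: "1 \<le> 1 + m"
    by (simp add: m_def)
  have num: "f - 2 * a * t + a^2 * q = (f - 2 * a * t) * (1 + m) + (a^2 * q - f * m + 2 * a * t * m)"
    by (simp add: algebra_simps)
  have "(f - 2 * a * t + a^2 * q) / (1 + m) = f - 2 * a * t + (a^2 * q - f * m + 2 * a * t * m) / (1 + m)"
    unfolding num using D by (simp add: add_divide_distrib)
  moreover have "a^2 * q - f * m + 2 * a * t * m \<le> 3 * K * m * (1 + m)"
    using descent_correction_le[OF a K f t q] by (simp add: m_def)
  then have "(a^2 * q - f * m + 2 * a * t * m) / (1 + m) \<le> 3 * K * m"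
    using D by (simp add: pos_divide_le_eq)
  moreover have "m \<le> G^2 * a^2"
    using mult_left_mono[OF power_mono[OF nG n], of "a^2" 2] by (simp add: m_def mult.commute)
  then have "3 * K * m \<le> 3 * K * G^2 * a^2"
    using K by (simp add: mult_left_mono mult.assoc)
  ultimately show ?thesis
    unfolding m_def[symmetric] by linarith
qed

lemma rayleigh_unitize_step_le:
  fixes H A :: "real^'n^'n"
  assumes H: "\<And>a b. (H *v a) \<bullet> b = a \<bullet> (H *v b)"
    and ps: "orth_list ps" and v: "norm v = 1" "\<forall>p\<in>set ps. p \<bullet> v = 0" and a: "0 \<le> a"
    and AG: "norm (A *v v) \<le> G"
  defines "g \<equiv> Pmat ps v *v (A *v v)"
  shows "unitize (v - a *\<^sub>R g) \<bullet> (H *v unitize (v - a *\<^sub>R g))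
           \<le> v \<bullet> (H *v v) - 2 * a * (g \<bullet> (H *v v)) + 3 * opnorm H * G^2 * a^2"
proof -
  define y where "y = v - a *\<^sub>R g"
  define n where "n = norm g"
  have HK: "norm (H *v x) \<le> opnorm H * norm x" for x
    by (rule norm_mult_vec_le_opnorm)
  have "v \<bullet> g = 0"
    using Pmat_mult_vec_orthogonal(1)[OF ps v] by (simp add: g_def)
  then have "y \<bullet> y = 1 + a^2 * (g \<bullet> g)"
    using v(1) by (simp add: y_def inner_diff_left inner_diff_right inner_commute power2_eq_square
        norm_eq_1)
  then have "norm y^2 = 1 + a^2 * n^2"
    by (simp add: n_def power2_norm_eq_inner)
  then have "unitize y \<bullet> (H *v unitize y) = (y \<bullet> (H *v y)) / (1 + a^2 * n^2)"
    by (simp add: unitize_def matrix_vector_mult_scaleR power2_eq_square)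
  also have "y \<bullet> (H *v y) = v \<bullet> (H *v v) - 2 * a * (g \<bullet> (H *v v)) + a^2 * (g \<bullet> (H *v g))"
    using H[of v g] by (simp add: y_def matrix_vector_mult_diff_distrib matrix_vector_mult_scaleR
        inner_diff_left inner_diff_right inner_commute power2_eq_square algebra_simps)
  also have "(\<dots>) / (1 + a^2 * n^2) \<le> v \<bullet> (H *v v) - 2 * a * (g \<bullet> (H *v v)) + 3 * opnorm H * G^2 * a^2"
  proof (rule descent_quotient_le[OF a _ opnorm_nonneg])
    show "\<bar>v \<bullet> (H *v v)\<bar> \<le> opnorm H"
      using Cauchy_Schwarz_ineq2[of v "H *v v"] HK[of v] v(1) by simp
    show "\<bar>g \<bullet> (H *v v)\<bar> \<le> n * opnorm H"
      using Cauchy_Schwarz_ineq2[of g "H *v v"] HK[of v] v(1) mult_left_mono[OF HK[of v], of n]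
      by (simp add: n_def)
    show "\<bar>g \<bullet> (H *v g)\<bar> \<le> opnorm H * n^2"
      using Cauchy_Schwarz_ineq2[of g "H *v g"] mult_left_mono[OF HK[of g], of n]
      by (simp add: n_def power2_eq_square mult.commute mult.left_commute)
    show "n \<le> G"
      using norm_Pmat_mult_vec_le[OF ps v, of "A *v v"] AG by (simp add: n_def g_def)
  qed (simp add: n_def)
  finally show ?thesis
    by (simp add: y_def)
qed

locale stochastic_hessian = prob_space M for M :: "'w measure" +
  fixes Hs :: "'w \<Rightarrow> real^'n^'n" and H :: "real^'n^'n" and G1 L \<epsilon> :: real
  assumes Hs_measurable [measurable]: "Hs \<in> borel_measurable M"
    and Hs_integrable: "integrable M Hs"
    and Hs_mean: "integral\<^sup>L M Hs = H"
    and Hs_bounded: "\<And>w. w \<in> space M \<Longrightarrow> opnorm (Hs w) \<le> G1"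
    and H_self_adjoint: "\<And>a b. (H *v a) \<bullet> b = a \<bullet> (H *v b)"
    and L_pos: "0 < L" and \<epsilon>_pos: "0 < \<epsilon>"
begin

definition rayleigh :: "real^'n \<Rightarrow> real" where
  "rayleigh v = v \<bullet> (H *v v)"

definition sgd_step :: "real \<Rightarrow> (real^'n) list \<Rightarrow> real^'n \<Rightarrow> 'w \<Rightarrow> real^'n" where
  "sgd_step a ps v x = unitize (v - a *\<^sub>R (Pmat ps v *v (Hs x *v v)))"

lemma abs_rayleigh_le: "v = 0 \<or> norm v = 1 \<Longrightarrow> \<bar>rayleigh v\<bar> \<le> opnorm H"
  using Cauchy_Schwarz_ineq2[of v "H *v v"] norm_mult_vec_le_opnorm[of H v] opnorm_nonneg[of H]
  by (auto simp: rayleigh_def)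

lemma not_loop_cond_0: "\<not> loop_cond H L \<epsilon> ps 0"
  using mult_pos_pos[OF zero_less_power[OF L_pos, of 2] \<epsilon>_pos] by (simp add: loop_cond_def)

lemma borel_measurable_sgd_step [measurable]: "sgd_step a ps v \<in> borel_measurable M"
proof -
  have "(\<lambda>x. Pmat (map (\<lambda>F. F x) (map (\<lambda>p _. p) ps)) v *v (Hs x *v v)) \<in> borel_measurable M"
    by (rule borel_measurable_Pmat_mult_vec) auto
  then have [measurable]: "(\<lambda>x. Pmat ps v *v (Hs x *v v)) \<in> borel_measurable M"
    by (simp add: o_def)
  show ?thesis
    unfolding sgd_step_def[abs_def] by measurable
qed

lemma perp_unit_sgd_step: "orth_list ps \<Longrightarrow> perp_unit ps v \<Longrightarrow> perp_unit ps (sgd_step a ps v x)"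
  unfolding sgd_step_def by (rule perp_unit_step)

lemma integrable_rayleigh_sgd_step:
  assumes "orth_list ps" "perp_unit ps v"
  shows "integrable M (\<lambda>x. rayleigh (sgd_step a ps v x))"
proof (rule integrable_const_bound[where B = "opnorm H"])
  show "AE x in M. norm (rayleigh (sgd_step a ps v x)) \<le> opnorm H"
    using abs_rayleigh_le[OF perp_unit_cases[OF perp_unit_sgd_step[OF assms]]] by simp
  show "(\<lambda>x. rayleigh (sgd_step a ps v x)) \<in> borel_measurable M"
    unfolding rayleigh_def by measurable
qed

text \<open>Since \<open>Hs\<close> is unbiased, the first-order term of a step averages to
  \<open>- 2 a norm (Pmat ps v *v (H *v v))\<^sup>2\<close>.\<close>

lemma expected_rayleigh_step_le:
  assumes ps: "orth_list ps" and v: "norm v = 1" "\<forall>p\<in>set ps. p \<bullet> v = 0" and a: "0 \<le> a"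
  shows "(\<integral>x. rayleigh (sgd_step a ps v x) \<partial>M)
           \<le> rayleigh v - 2 * a * norm (Pmat ps v *v (H *v v))^2 + 3 * opnorm H * G1^2 * a^2"
proof -
  define T where "T A = (Pmat ps v *v (A *v v)) \<bullet> (H *v v)" for A :: "real^'n^'n"
  have "linear T"
    by (rule linearI) (simp_all add: T_def matrix_vector_mult_add_rdistrib inner_add_left
        matrix_vector_right_distrib scaleR_matrix_vector_assoc[symmetric] matrix_vector_mult_scaleR)
  then have T: "bounded_linear T"
    by (simp add: linear_conv_bounded_linear)
  have int_T: "integrable M (\<lambda>x. T (Hs x))"
    by (rule integrable_bounded_linear[OF T Hs_integrable])
  have "(\<integral>x. T (Hs x) \<partial>M) = T H"
    using integral_bounded_linear[OF T Hs_integrable] Hs_mean by simp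
  also have "\<dots> = norm (Pmat ps v *v (H *v v))^2"
    using Pmat_inner_self[OF ps v, of "H *v v"] by (simp add: T_def power2_norm_eq_inner)
  finally have mean_T: "(\<integral>x. T (Hs x) \<partial>M) = norm (Pmat ps v *v (H *v v))^2" .
  have "rayleigh (sgd_step a ps v x) \<le> rayleigh v - 2 * a * T (Hs x) + 3 * opnorm H * G1^2 * a^2"
    if "x \<in> space M" for x
  proof -
    have "norm (Hs x *v v) \<le> G1"
      using norm_mult_vec_le_opnorm[of "Hs x" v] Hs_bounded[OF that] v(1) by simp
    from rayleigh_unitize_step_le[OF H_self_adjoint ps v a this] show ?thesis
      by (simp add: rayleigh_def sgd_step_def T_def)
  qed
  then have "(\<integral>x. rayleigh (sgd_step a ps v x) \<partial>M)
      \<le> (\<integral>x. rayleigh v - 2 * a * T (Hs x) + 3 * opnorm H * G1^2 * a^2 \<partial>M)"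
    using v int_T
    by (intro integral_mono integrable_rayleigh_sgd_step[OF ps]) (auto simp: perp_unit_def)
  also have "\<dots> = rayleigh v - 2 * a * (\<integral>x. T (Hs x) \<partial>M) + 3 * opnorm H * G1^2 * a^2"
    using int_T by (simp add: prob_space)
  finally show ?thesis
    by (simp add: mean_T)
qed

end

context stochastic_hessian
begin

section \<open>Almost sure termination\<close>

definition running_step_sum :: "nat \<Rightarrow> (nat \<Rightarrow> real) \<Rightarrow> (real^'n) list \<Rightarrow> real^'n \<Rightarrow> 'w stream \<Rightarrow> ennreal"
  where "running_step_sum N a ps v s =
    ennreal (\<Sum>n<N. if \<forall>i\<le>n. loop_cond H L \<epsilon> ps (phase_iter a Hs ps v (snth s) i) then a n else 0)"

definition step_budget :: "(nat \<Rightarrow> real) \<Rightarrow> real^'n \<Rightarrow> real" where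
  "step_budget a v = (rayleigh v + opnorm H + 3 * opnorm H * G1^2 * (\<Sum>n. (a n)^2)) / (2 * (L^2 * \<epsilon>))"

lemma borel_measurable_phase_iter_stream [measurable]:
  "(\<lambda>s. phase_iter a Hs ps v (snth s) i) \<in> borel_measurable (stream_space M)"
  using borel_measurable_phase_iter[of "map (\<lambda>p _. p) ps" "stream_space M" "\<lambda>_. v" "\<lambda>s. s" M Hs a i]
  by (simp add: o_def measurable_ident_sets)

lemma pred_loop_cond_stream [measurable]:
  "Measurable.pred (stream_space M) (\<lambda>s. loop_cond H L \<epsilon> ps (phase_iter a Hs ps v (snth s) i))"
  using pred_loop_cond[of "map (\<lambda>p _. p) ps" "stream_space M" "\<lambda>s. phase_iter a Hs ps v (snth s) i" H L \<epsilon>]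
  by (simp add: o_def)

lemma borel_measurable_running_step_sum [measurable]:
  "running_step_sum N a ps v \<in> borel_measurable (stream_space M)"
  unfolding running_step_sum_def by measurable

lemma phase_iter_SCons:
  "phase_iter a Hs ps v (snth (x ## s)) (Suc i) =
     phase_iter (\<lambda>i. a (Suc i)) Hs ps (sgd_step (a 0) ps v x) (snth s) i"
proof -
  have tl: "(\<lambda>i. snth (x ## s) (Suc i)) = snth s"
    by (simp add: fun_eq_iff)
  show ?thesis
    unfolding phase_iter_Suc_shift sgd_step_def tl by simp
qed

lemma running_step_sum_Suc_SCons:
  assumes "\<And>n. 0 \<le> a n"
  shows "running_step_sum (Suc N) a ps v (x ## s) =
    (if loop_cond H L \<epsilon> ps v
     then ennreal (a 0) + running_step_sum N (\<lambda>i. a (Suc i)) ps (sgd_step (a 0) ps v x) s else 0)"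
proof -
  let ?P = "\<lambda>i. loop_cond H L \<epsilon> ps (phase_iter a Hs ps v (snth (x ## s)) i)"
  let ?Q = "\<lambda>i. loop_cond H L \<epsilon> ps (phase_iter (\<lambda>i. a (Suc i)) Hs ps (sgd_step (a 0) ps v x) (snth s) i)"
  have all_le_Suc: "(\<forall>i\<le>Suc n. P i) \<longleftrightarrow> P 0 \<and> (\<forall>i\<le>n. P (Suc i))" for n and P :: "nat \<Rightarrow> bool"
    by (metis Suc_le_mono le0 not0_implies_Suc)
  have PQ: "?P (Suc i) = ?Q i" for i
    by (simp only: phase_iter_SCons)
  have "(\<Sum>n<Suc N. if \<forall>i\<le>n. ?P i then a n else 0) =
      (if ?P 0 then a 0 else 0) + (\<Sum>n<N. if ?P 0 \<and> (\<forall>i\<le>n. ?Q i) then a (Suc n) else 0)"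
    by (subst sum.lessThan_Suc_shift) (simp add: all_le_Suc PQ del: sum.lessThan_Suc phase_iter.simps(2))
  then show ?thesis
    using assms by (simp add: running_step_sum_def ennreal_plus sum_nonneg)
qed

lemma step_budget_nonneg: "perp_unit ps v \<Longrightarrow> summable (\<lambda>n. (a n)^2) \<Longrightarrow> 0 \<le> step_budget a v"
  using abs_rayleigh_le[OF perp_unit_cases, of ps v] opnorm_nonneg[of H] L_pos \<epsilon>_pos
    suminf_nonneg[of "\<lambda>n. (a n)^2"]
  by (auto simp: step_budget_def intro!: divide_nonneg_pos add_nonneg_nonneg mult_nonneg_nonneg)

lemma nn_integral_step_budget_sgd_step:
  assumes "orth_list ps" "perp_unit ps v" "summable (\<lambda>n. (b n)^2)"
  shows "(\<integral>\<^sup>+x. ennreal (step_budget b (sgd_step a ps v x)) \<partial>M) = ennreal (\<integral>x. step_budget b (sgd_step a ps v x) \<partial>M)"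
  using integrable_rayleigh_sgd_step[OF assms(1,2)]
    step_budget_nonneg[OF perp_unit_sgd_step[OF assms(1,2)] assms(3)]
  by (intro nn_integral_eq_integral) (simp_all add: step_budget_def)

text \<open>While the loop runs, \<open>L\<^sup>2 \<epsilon> \<le> norm (Pmat ps v *v (H *v v))\<^sup>2\<close>, so a step of size \<open>a 0\<close>
  lowers the expected Rayleigh quotient by \<open>2 a 0 L\<^sup>2 \<epsilon>\<close> up to \<open>O((a 0)\<^sup>2)\<close>: the budget pays
  for \<open>a 0\<close>.\<close>

lemma step_budget_step_le:
  assumes ps: "orth_list ps" and v: "perp_unit ps v" and running: "loop_cond H L \<epsilon> ps v"
    and a: "\<And>n. 0 < a n" "summable (\<lambda>n. (a n)^2)"
  shows "a 0 + (\<integral>x. step_budget (\<lambda>i. a (Suc i)) (sgd_step (a 0) ps v x) \<partial>M) \<le> step_budget a v"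
proof -
  let ?C = "3 * opnorm H * G1^2"
  have "v \<noteq> 0"
    using running not_loop_cond_0 by auto
  then have v': "norm v = 1" "\<forall>p\<in>set ps. p \<bullet> v = 0"
    using v by (auto simp: perp_unit_def)
  have r: "L^2 * \<epsilon> \<le> norm (Pmat ps v *v (H *v v))^2"
    using running by (simp add: loop_cond_def)
  have pos: "0 < 2 * (L^2 * \<epsilon>)"
    using L_pos \<epsilon>_pos by simp
  have "(\<integral>x. step_budget (\<lambda>i. a (Suc i)) (sgd_step (a 0) ps v x) \<partial>M) =
      ((\<integral>x. rayleigh (sgd_step (a 0) ps v x) \<partial>M) + opnorm H + ?C * (\<Sum>n. (a (Suc n))^2)) / (2 * (L^2 * \<epsilon>))"
    using integrable_rayleigh_sgd_step[OF ps v] by (simp add: step_budget_def prob_space)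
  also have "\<dots> \<le> (rayleigh v - 2 * a 0 * (L^2 * \<epsilon>) + ?C * (a 0)^2 + opnorm H + ?C * (\<Sum>n. (a (Suc n))^2))
      / (2 * (L^2 * \<epsilon>))"
  proof -
    have "(\<integral>x. rayleigh (sgd_step (a 0) ps v x) \<partial>M)
        \<le> rayleigh v - 2 * a 0 * norm (Pmat ps v *v (H *v v))^2 + ?C * (a 0)^2"
      using a(1)[of 0] by (intro expected_rayleigh_step_le[OF ps v']) simp
    also have "\<dots> \<le> rayleigh v - 2 * a 0 * (L^2 * \<epsilon>) + ?C * (a 0)^2"
      using r a(1)[of 0] by (simp add: mult_left_mono)
    finally show ?thesis
      using pos by (simp add: divide_right_mono)
  qed
  also have "\<dots> = step_budget a v - a 0"
  proof -
    have tail: "(\<Sum>n. (a (Suc n))^2) = (\<Sum>n. (a n)^2) - (a 0)^2"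
      using suminf_split_head[OF a(2)] by simp
    show ?thesis
      unfolding step_budget_def tail using L_pos \<epsilon>_pos by (simp add: field_simps)
  qed
  finally show ?thesis
    by simp
qed

end

context stochastic_hessian
begin

lemma nn_integral_running_step_sum_le:
  assumes ps: "orth_list ps"
  shows "perp_unit ps v \<Longrightarrow> (\<And>n. 0 < a n) \<Longrightarrow> summable (\<lambda>n. (a n)^2) \<Longrightarrow>
    (\<integral>\<^sup>+s. running_step_sum N a ps v s \<partial>stream_space M) \<le> ennreal (step_budget a v)"
proof (induction N arbitrary: a v)
  case 0
  then show ?case
    by (simp add: running_step_sum_def)
next
  case (Suc N)
  define b where "b = (\<lambda>i. a (Suc i))"
  have b: "\<And>n. 0 < b n" "summable (\<lambda>n. (b n)^2)"
    using Suc.prems(2,3) summable_Suc_iff[of "\<lambda>n. (a n)^2"] by (simp_all add: b_def)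
  have a0: "0 \<le> a n" for n
    using Suc.prems(2) less_imp_le by blast
  have unfold: "(\<integral>\<^sup>+s. running_step_sum (Suc N) a ps v s \<partial>stream_space M) =
      (\<integral>\<^sup>+x. (\<integral>\<^sup>+s. running_step_sum (Suc N) a ps v (x ## s) \<partial>stream_space M) \<partial>M)"
    by (rule nn_integral_stream_space) measurable
  show ?case
  proof (cases "loop_cond H L \<epsilon> ps v")
    case False
    then show ?thesis
      unfolding unfold by (simp add: running_step_sum_Suc_SCons[OF a0])
  next
    case True
    let ?w = "\<lambda>x. sgd_step (a 0) ps v x"
    have "(\<integral>\<^sup>+x. (\<integral>\<^sup>+s. running_step_sum (Suc N) a ps v (x ## s) \<partial>stream_space M) \<partial>M)
        = (\<integral>\<^sup>+x. ennreal (a 0) + (\<integral>\<^sup>+s. running_step_sum N b ps (?w x) s \<partial>stream_space M) \<partial>M)"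
      using True prob_space.emeasure_space_1[OF prob_space_stream_space]
      by (simp add: running_step_sum_Suc_SCons[OF a0] b_def nn_integral_add)
    also have "\<dots> \<le> (\<integral>\<^sup>+x. ennreal (a 0) + ennreal (step_budget b (?w x)) \<partial>M)"
      using Suc.IH b perp_unit_sgd_step[OF ps Suc.prems(1)] by (intro nn_integral_mono add_left_mono) auto
    also have "\<dots> = ennreal (a 0) + ennreal (\<integral>x. step_budget b (?w x) \<partial>M)"
      unfolding nn_integral_step_budget_sgd_step[OF ps Suc.prems(1) b(2), symmetric]
      by (subst nn_integral_add) (simp_all add: emeasure_space_1 step_budget_def rayleigh_def)
    also have "\<dots> \<le> ennreal (step_budget a v)"
      using step_budget_step_le[OF ps Suc.prems(1) True Suc.prems(2,3)] a0[of 0]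
        step_budget_nonneg[OF perp_unit_sgd_step[OF ps Suc.prems(1)] b(2)]
      by (simp add: b_def integral_nonneg ennreal_leI flip: ennreal_plus)
    finally show ?thesis
      unfolding unfold .
  qed
qed

text \<open>The expected total step size spent while the loop runs is bounded by the budget, hence
  finite almost surely; since \<open>\<Sum>n. a n = \<infinity>\<close>, the loop cannot run forever.\<close>

lemma phase_stops_AE:
  assumes ps: "orth_list ps" and v: "perp_unit ps v"
    and a: "\<And>n. 0 < a n" "summable (\<lambda>n. (a n)^2)" "\<not> summable a"
  shows "AE s in stream_space M. \<exists>n. \<not> loop_cond H L \<epsilon> ps (phase_iter a Hs ps v (snth s) n)"
proof -
  define S where "S s = (SUP N. running_step_sum N a ps v s)" for s
  have "incseq (\<lambda>N. running_step_sum N a ps v)"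
    using a(1) by (intro incseq_SucI) (auto simp: le_fun_def running_step_sum_def less_imp_le intro!: ennreal_leI)
  then have "(\<integral>\<^sup>+s. S s \<partial>stream_space M) = (SUP N. \<integral>\<^sup>+s. running_step_sum N a ps v s \<partial>stream_space M)"
    unfolding S_def by (rule nn_integral_monotone_convergence_SUP) measurable
  also have "\<dots> \<le> ennreal (step_budget a v)"
    using nn_integral_running_step_sum_le[OF ps v a(1,2)] by (intro SUP_least) auto
  finally have finite_S: "AE s in stream_space M. S s \<noteq> \<infinity>"
    by (intro nn_integral_PInf_AE) (auto simp: S_def top_unique)
  show ?thesis
  proof (rule eventually_mono[OF finite_S], rule ccontr)
    fix s assume fin: "S s \<noteq> \<infinity>"
      and "\<not> (\<exists>n. \<not> loop_cond H L \<epsilon> ps (phase_iter a Hs ps v (snth s) n))"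
    then have "running_step_sum N a ps v s = ennreal (sum a {..<N})" for N
      by (simp add: running_step_sum_def)
    then have "ennreal (sum a {..<N}) \<le> S s" for N
      unfolding S_def by (metis SUP_upper UNIV_I)
    moreover have "S s < \<top>"
      using fin by (simp add: top.not_eq_extremum)
    ultimately have "enn2real (ennreal (sum a {..<N})) \<le> enn2real (S s)" for N
      by (rule enn2real_mono)
    moreover have "0 \<le> sum a {..<N}" for N
      using a(1) by (simp add: sum_nonneg less_imp_le)
    ultimately have "sum a {..<N} \<le> enn2real (S s)" for N
      by simp
    then have "summable a"
      using a(1) by (intro summableI_nonneg_bounded) (auto simp: less_imp_le)
    then show False
      using a(3) by simp
  qed
qed

lemma AE_run_after_phase_iter:
  assumes ps: "orth_list ps"
    and rest: "\<And>w. perp_unit ps w \<Longrightarrow> AE s in stream_space M. run \<alpha> Hs H L \<epsilon> (ps @ [w]) 0 us (snth s) \<noteq> None"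
  shows "perp_unit ps v \<Longrightarrow>
    AE s in stream_space M. run \<alpha> Hs H L \<epsilon> (ps @ [phase_iter a Hs ps v (snth s) n]) 0 us (snth (sdrop n s)) \<noteq> None"
proof (induction n arbitrary: a v)
  case 0
  then show ?case
    using rest by simp
next
  case (Suc n)
  have "Measurable.pred (stream_space M) (\<lambda>s. run \<alpha> Hs H L \<epsilon>
      (map (\<lambda>F. F s) (map (\<lambda>p _. p) ps @ [\<lambda>s. phase_iter a Hs ps v (snth s) (Suc n)])) 0 us
      (snth (sdrop (Suc n) s)) \<noteq> None)"
    using borel_measurable_phase_iter_stream[of a ps v "Suc n"]
    by (intro pred_run_not_None[OF _ measurable_sdrop Hs_measurable]) (auto simp del: phase_iter.simps)
  then have "Measurable.pred (stream_space M) (\<lambda>s. run \<alpha> Hs H L \<epsilon>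
      (ps @ [phase_iter a Hs ps v (snth s) (Suc n)]) 0 us (snth (sdrop (Suc n) s)) \<noteq> None)"
    by (simp add: o_def)
  moreover have "AE s in stream_space M. run \<alpha> Hs H L \<epsilon> (ps @ [phase_iter a Hs ps v (snth (x ## s)) (Suc n)]) 0 us
      (snth (sdrop (Suc n) (x ## s))) \<noteq> None" for x
    using Suc.IH[OF perp_unit_sgd_step[OF ps Suc.prems]] by (simp add: phase_iter_SCons del: phase_iter.simps)
  ultimately show ?case
    by (simp add: AE_stream_space)
qed

lemma run_not_None_AE:
  assumes \<alpha>: "\<And>n. 0 < \<alpha> n" "summable (\<lambda>n. (\<alpha> n)^2)" "\<not> summable \<alpha>"
  shows "orth_list ps \<Longrightarrow> \<forall>u\<in>set us. norm u = 1 \<Longrightarrow>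
    AE s in stream_space M. run \<alpha> Hs H L \<epsilon> ps 0 us (snth s) \<noteq> None"
proof (induction us arbitrary: ps)
  case Nil
  then show ?case by simp
next
  case (Cons u us)
  let ?v = "phase_iter \<alpha> Hs ps (phase_start ps u)"
  let ?running = "\<lambda>s i. loop_cond H L \<epsilon> ps (?v (snth s) i)"
  let ?rest = "\<lambda>s n. run \<alpha> Hs H L \<epsilon> (ps @ [?v (snth s) n]) 0 us (snth (sdrop n s)) \<noteq> None"
  have v0: "perp_unit ps (phase_start ps u)"
    using Cons.prems by (simp add: perp_unit_phase_start)
  have stops: "AE s in stream_space M. \<exists>n. \<not> ?running s n"
    by (rule phase_stops_AE[OF Cons.prems(1) v0 \<alpha>])
  have rest: "AE s in stream_space M. \<forall>n. ?rest s n"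
    unfolding AE_all_countable
    using Cons.IH Cons.prems orth_list_snoc v0 by (intro allI AE_run_after_phase_iter) auto
  have completes: "run \<alpha> Hs H L \<epsilon> ps 0 (u # us) (snth s) \<noteq> None"
    if "\<exists>n. \<not> ?running s n" "\<forall>n. ?rest s n" for s
  proof -
    define N where "N = (LEAST n. \<not> ?running s n)"
    have "\<not> ?running s N" "\<forall>i<N. ?running s i"
      using LeastI_ex[OF that(1)] not_less_Least[of _ "\<lambda>n. \<not> ?running s n"] by (auto simp: N_def)
    moreover have "(\<lambda>i. snth s (N + i)) = snth (sdrop N s)"
      by (simp add: fun_eq_iff sdrop_snth)
    ultimately show ?thesis
      unfolding run_Cons_not_None_iff using that(2) by auto
  qed
  from stops rest show ?case
    by eventually_elim (rule completes)
qed

lemma algorithm1_not_None_AE: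
  assumes "\<And>n. 0 < \<alpha> n" "summable (\<lambda>n. (\<alpha> n)^2)" "\<not> summable \<alpha>" "\<forall>u\<in>set vinit. norm u = 1"
  shows "AE ws in (\<Pi>\<^sub>M n\<in>(UNIV :: nat set). M). algorithm1 \<alpha> Hs H L \<epsilon> vinit ws \<noteq> None"
proof -
  have "AE s in stream_space M. run \<alpha> Hs H L \<epsilon> [] 0 vinit (snth s) \<noteq> None"
    using run_not_None_AE assms by simp
  then have "AE ws in (\<Pi>\<^sub>M n\<in>(UNIV :: nat set). M). run \<alpha> Hs H L \<epsilon> [] 0 vinit (snth (to_stream ws)) \<noteq> None"
    by (subst (asm) stream_space_eq_distr) (rule AE_distrD[OF measurable_to_stream])
  moreover have "snth (to_stream ws) = ws" for ws :: "nat \<Rightarrow> 'w"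
    by (simp add: fun_eq_iff to_stream_def)
  ultimately show ?thesis
    by (simp add: algorithm1_def)
qed

end

theorem theorem4p15:
  fixes f :: "real^'n \<Rightarrow> real"
    and g :: "real^'n \<Rightarrow> real^'n"
    and Hf :: "real^'n \<Rightarrow> real^'n^'n"
    and T :: "real^'n \<Rightarrow> ((real^'n) \<Rightarrow>\<^sub>L (real^'n^'n))"
    and xstar x :: "real^'n"
    and k :: nat
    and \<delta> L \<mu> Mlip \<sigma> G1 \<epsilon> :: real
    and M :: "'w measure"
    and Hs :: "'w \<Rightarrow> real^'n^'n"
    and \<alpha> :: "nat \<Rightarrow> real"
    and vinit :: "(real^'n) list"
  assumes grad: "\<And>y. (f has_derivative (\<lambda>h. g y \<bullet> h)) (at y)"
    and hess: "\<And>y. (g has_derivative (\<lambda>h. Hf y *v h)) (at y)"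
    and third: "\<And>y. (Hf has_derivative blinfun_apply (T y)) (at y)"
    and C3: "continuous_on UNIV T"
    and crit: "g xstar = 0"
    and k_ge: "1 \<le> k" and k_le: "k \<le> CARD('n) - 1"
    and \<delta>_pos: "\<delta> > 0" and \<mu>_pos: "\<mu> > 0" and L_gt: "L > \<mu>" and Mlip_pos: "Mlip > 0"
    and spec: "\<And>y. norm (y - xstar) \<le> \<delta> \<Longrightarrow>
                 \<exists>lam u. sorted_eigs (Hf y) lam u \<and> - L < lam 1 \<and> lam k < - \<mu>
                         \<and> \<mu> < lam (k + 1) \<and> lam (CARD('n)) < L"
    and lip: "\<And>y z. norm (y - xstar) \<le> \<delta> \<Longrightarrow> norm (z - xstar) \<le> \<delta> \<Longrightarrow>
                 opnorm (Hf y - Hf z) \<le> Mlip * norm (y - z)"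
    and x_ball: "norm (x - xstar) \<le> \<delta>"
    and P: "prob_space M"
    and Hs_meas: "Hs \<in> borel_measurable M"
    and Hs_int: "integrable M Hs"
    and Hs_mean: "integral\<^sup>L M Hs = Hf x"
    and Hs_var: "integral\<^sup>L M (\<lambda>w. (opnorm (Hs w))\<^sup>2) \<le> \<sigma>\<^sup>2"
    and Hs_bdd: "\<And>w. w \<in> space M \<Longrightarrow> opnorm (Hs w) \<le> G1"
    and \<alpha>_pos: "\<And>n. \<alpha> n > 0"
    and \<alpha>_div: "\<not> summable \<alpha>"
    and \<alpha>_sq: "summable (\<lambda>n. (\<alpha> n)\<^sup>2)"
    and \<epsilon>_pos: "\<epsilon> > 0"
    and vinit_len: "length vinit = k"
    and vinit_unit: "\<And>v. v \<in> set vinit \<Longrightarrow> norm v = 1"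
    and standing: "AE ws in (\<Pi>\<^sub>M n\<in>(UNIV :: nat set). M).
                     \<forall>vs. algorithm1 \<alpha> Hs (Hf x) L \<epsilon> vinit ws = Some vs \<longrightarrow>
                          (\<forall>v\<in>set vs. v \<bullet> (Hf x *v v) < 0)"
  shows "(AE ws in (\<Pi>\<^sub>M n\<in>(UNIV :: nat set). M). algorithm1 \<alpha> Hs (Hf x) L \<epsilon> vinit ws \<noteq> None)
       \<and> (\<forall>lam u. sorted_eigs (Hf x) lam u \<longrightarrow>
            (let Q = Qconst (neg_gaps lam (CARD('n))) \<mu> L;
                 zbar = sqrt (L ^ (2 * k) * Q ^ k * (fact k)\<^sup>2 * \<epsilon> / real CARD('n))
             in zbar < gap_bound (neg_gaps lam (CARD('n))) \<mu> \<longrightarrow>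
                (AE ws in (\<Pi>\<^sub>M n\<in>(UNIV :: nat set). M).
                   \<forall>vs. algorithm1 \<alpha> Hs (Hf x) L \<epsilon> vinit ws = Some vs \<longrightarrow>
                     (opnorm ((\<Sum>i<k. outer (vs ! i) (vs ! i)) - (\<Sum>i<k. outer (u (i + 1)) (u (i + 1)))))\<^sup>2
                       \<le> real k * zbar\<^sup>2 * real CARD('n))))"
proof -
  obtain lam0 u0 where eigs0: "sorted_eigs (Hf x) lam0 u0" and gap0: "\<mu> < lam0 (k + 1)"
    using spec[OF x_ball] by blast
  have k: "k < CARD('n)"
    using k_ge k_le by linarith
  interpret stochastic_hessian M Hs "Hf x" G1 L \<epsilon>
    using P Hs_meas Hs_int Hs_mean Hs_bdd sorted_eigs_self_adjoint[OF eigs0] L_gt \<mu>_pos \<epsilon>_pos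
    by (simp add: stochastic_hessian_def stochastic_hessian_axioms_def)
  have error: "AE ws in (\<Pi>\<^sub>M n\<in>(UNIV :: nat set). M).
      \<forall>vs. algorithm1 \<alpha> Hs (Hf x) L \<epsilon> vinit ws = Some vs \<longrightarrow>
        (opnorm ((\<Sum>i<k. outer (vs ! i) (vs ! i)) - (\<Sum>i<k. outer (u (i + 1)) (u (i + 1)))))\<^sup>2 \<le> B"
    if eigs: "sorted_eigs (Hf x) lam u" and B: "real k ^ 3 * L\<^sup>2 * \<epsilon> / \<mu>\<^sup>2 \<le> B" for lam u B
    using sorted_eigs_gt_transfer[OF eigs eigs0 k, of \<mu>] gap0 L_gt \<mu>_pos \<epsilon>_pos k vinit_unit
    by (intro AE_algorithm1_output_error[OF eigs _ \<mu>_pos _ _ _ vinit_len _ standing B]) (auto simp: less_imp_le)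
  show ?thesis
    unfolding Let_def
  proof (intro conjI allI impI error)
    show "AE ws in (\<Pi>\<^sub>M n\<in>(UNIV :: nat set). M). algorithm1 \<alpha> Hs (Hf x) L \<epsilon> vinit ws \<noteq> None"
      using vinit_unit by (intro algorithm1_not_None_AE[OF \<alpha>_pos \<alpha>_sq \<alpha>_div]) auto
  qed (auto intro!: error_bound_le_zbar[OF k_ge _ \<mu>_pos L_gt \<epsilon>_pos] Qconst_ge[OF \<mu>_pos])
qed

end
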